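(* Let $G=(V,E,H)$ be a HEDG, $\mathbb{P}_V$ a probability distribution on $\mathcal{X}_V=\prod_{v\in V}\mathcal{X}_v$ (standard Borel spaces) and $<$ a total order on $V$. Then $(G,\mathbb{P}_V,<)$ satisfies the ordered local Markov property if and only if it satisfies the recursive factorization property.
   Context: HEDG $G=(V,E,H)$: $V$ finite, $E\subseteq V\times V$ (self-loops allowed), $H$ a simplicial complex on $V$ (contains singletons, closed under subsets); $v\leftrightarrow w$ for distinct $v,w$ with $\{v,w\}\in H$. $A$ is ancestral if it contains all nodes with a directed path into $A$, with induced sub-HEDG structure. Marginalization $G^{\mathrm{marg}\setminus U}=(V\setminus U,E',H')$: $v_1\to v_2\in E'$ iff a directed path $v_1\to u_1\to\cdots\to u_r\to v_2$ ($r\ge0$, $u_i\in U$) exists; $F'\in H'$ iff there is $F\in H$, $F\subseteq F'\cup U$, each $v\in F'$ in $F\setminus U$ or reached by a directed path $u_1\to\cdots\to u_r\to v$ ($r\ge1$, $u_i\in U$, $u_1\in F$). Moralization: $v - w$ ($v\ne w$) iff there are $v_1,\dots,v_n$ with $v\in\{v_1\}\cup\mathrm{Pa}(v_1)$, $w\in\{v_n\}\cup\mathrm{Pa}(v_n)$, $v_1\leftrightarrow\cdots\leftrightarrow v_n$; $\partial_U(v)$ = neighbours in undirected graph $U$. For a HEDG $A$ (e.g. an ancestral sub-HEDG of $G$) and $v\in A$: $\mathrm{Pred}^A_\le(v)=A^{\mathrm{marg}\setminus\{w\in A:w>v\}}$, and $\partial^A_\le(v):=\partial_{\mathrm{Pred}^A_\le(v)^{\mathrm{moral}}}(v)$.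 Ordered local Markov property: for all $v\in V$ and every ancestral sub-HEDG $A$ of $\mathrm{Pred}^G_\le(v)$ with $v\in A$: $\{v\}\perp_{\mathbb{P}_V}A\setminus\{v\}\mid\partial_{A^{\mathrm{moral}}}(v)$ (conditional independence of coordinate projections). Recursive factorization property: for every ancestral sub-HEDG $A$ of $G$ and every measurable product set $B=\prod_{v\in A}B_v\subseteq\mathcal{X}_A$, $\mathbb{P}_A(B)=\int\cdots\int\prod_{v\in A}\mathbf 1_{B_v}(x_v)\,d\mathbb{P}_V^{v\mid x_{\partial^A_\le(v)}}(x_v)$, where the iterated integration is taken from the largest $v\in A$ (innermost) to the smallest (outermost) with respect to $<$, $\mathbb{P}_V^{v\mid x_{\partial^A_\le(v)}}$ is the regular conditional distribution of the $v$-coordinate given the coordinates in $\partial^A_\le(v)$ at the value $x_{\partial^A_\le(v)}$, and $\mathbb{P}_A$ is the marginal on $\mathcal{X}_A$. *)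

theory Defs
  imports "HOL-Probability.Probability"
begin

record 'v hedg =
  nodes :: "'v set"
  edges :: "('v \<times> 'v) set"
  hyper :: "'v set set"

text \<open>A HEDG (V,E,H): V finite, E a set of directed edges on V (self-loops allowed),
  H a simplicial complex on V (contains all singletons, closed under subsets).\<close>
definition is_hedg :: "'v hedg \<Rightarrow> bool" where
  "is_hedg G \<longleftrightarrow> finite (nodes G) \<and> edges G \<subseteq> nodes G \<times> nodes G
     \<and> (\<forall>F\<in>hyper G. F \<subseteq> nodes G)
     \<and> (\<forall>v\<in>nodes G. {v} \<in> hyper G)
     \<and> (\<forall>F\<in>hyper G. \<forall>F'. F' \<subseteq> F \<longrightarrow> F' \<in> hyper G)"

text \<open>Bidirected edge v <-> w: v, w distinct and {v,w} a hyperedge.\<close>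
definition bidir :: "'v hedg \<Rightarrow> 'v \<Rightarrow> 'v \<Rightarrow> bool" where
  "bidir G v w \<longleftrightarrow> v \<noteq> w \<and> {v, w} \<in> hyper G"

definition parents :: "'v hedg \<Rightarrow> 'v \<Rightarrow> 'v set" where
  "parents G v = {u. (u, v) \<in> edges G}"

definition dpath :: "'v hedg \<Rightarrow> 'v list \<Rightarrow> bool" where
  "dpath G xs \<longleftrightarrow> successively (\<lambda>a b. (a, b) \<in> edges G) xs"

definition ancestral :: "'v hedg \<Rightarrow> 'v set \<Rightarrow> bool" where
  "ancestral G A \<longleftrightarrow> A \<subseteq> nodes G \<and> (\<forall>w a. a \<in> A \<longrightarrow> (w, a) \<in> (edges G)\<^sup>* \<longrightarrow> w \<in> A)"

definition induced :: "'v hedg \<Rightarrow> 'v set \<Rightarrow> 'v hedg" where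
  "induced G A = \<lparr> nodes = A, edges = edges G \<inter> (A \<times> A), hyper = {F \<in> hyper G. F \<subseteq> A} \<rparr>"

definition marg :: "'v hedg \<Rightarrow> 'v set \<Rightarrow> 'v hedg" where
  "marg G U = \<lparr> nodes = nodes G - U,
     edges = {(v1, v2). v1 \<in> nodes G - U \<and> v2 \<in> nodes G - U \<and>
                (\<exists>us. set us \<subseteq> U \<and> dpath G (v1 # us @ [v2]))},
     hyper = {F'. F' \<subseteq> nodes G - U \<and>
                (\<exists>F \<in> hyper G. F \<subseteq> F' \<union> U \<and>
                   (\<forall>v \<in> F'. v \<in> F - U \<or>
                      (\<exists>us. us \<noteq> [] \<and> set us \<subseteq> U \<and> hd us \<in> F \<and> dpath G (us @ [v]))))} \<rparr>"

definition moral_adj :: "'v hedg \<Rightarrow> 'v \<Rightarrow> 'v \<Rightarrow> bool" where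
  "moral_adj G v w \<longleftrightarrow> v \<noteq> w \<and>
     (\<exists>vs. vs \<noteq> [] \<and> set vs \<subseteq> nodes G \<and>
        v \<in> {hd vs} \<union> parents G (hd vs) \<and>
        w \<in> {last vs} \<union> parents G (last vs) \<and>
        successively (bidir G) vs)"

definition moral_nbrs :: "'v hedg \<Rightarrow> 'v \<Rightarrow> 'v set" where
  "moral_nbrs G v = {w \<in> nodes G. moral_adj G v w}"

text \<open>The total order is given as a strict relation r; (v, w) \<in> r means v < w.
  Pred_\<le>(v) = G^{marg \ {w : w > v}}.\<close>
definition Pred_le :: "'v hedg \<Rightarrow> ('v \<times> 'v) set \<Rightarrow> 'v \<Rightarrow> 'v hedg" where
  "Pred_le G r v = marg G {w \<in> nodes G. (v, w) \<in> r}"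

definition pred_bd :: "'v hedg \<Rightarrow> ('v \<times> 'v) set \<Rightarrow> 'v \<Rightarrow> 'v set" where
  "pred_bd A r v = moral_nbrs (Pred_le A r v) v"

definition standard_borel :: "'x measure \<Rightarrow> bool" where
  "standard_borel M \<longleftrightarrow> (\<exists>X. completely_metrizable_space X \<and> separable_space X \<and>
      topspace X = space M \<and> sets M = sigma_sets (topspace X) {U. openin X U})"

definition coord_algebra :: "('v \<Rightarrow> 'x) measure \<Rightarrow> ('v \<Rightarrow> 'x measure) \<Rightarrow> 'v set \<Rightarrow> ('v \<Rightarrow> 'x) measure" where
  "coord_algebra P M Z = vimage_algebra (space P) (\<lambda>x. restrict x Z) (PiM Z M)"

definition cond_indep :: "('v \<Rightarrow> 'x) measure \<Rightarrow> ('v \<Rightarrow> 'x measure) \<Rightarrow> 'v set \<Rightarrow> 'v set \<Rightarrow> 'v set \<Rightarrow> bool" where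
  "cond_indep P M X Y Z \<longleftrightarrow>
     (\<forall>S \<in> sets (PiM X M). \<forall>T \<in> sets (PiM Y M).
        let SX = {x \<in> space P. restrict x X \<in> S}; TY = {x \<in> space P. restrict x Y \<in> T};
            F = coord_algebra P M Z in
        AE x in P. real_cond_exp P F (indicator (SX \<inter> TY)) x
                 = real_cond_exp P F (indicator SX) x * real_cond_exp P F (indicator TY) x)"

definition is_rcd :: "('v \<Rightarrow> 'x) measure \<Rightarrow> ('v \<Rightarrow> 'x measure) \<Rightarrow> 'v \<Rightarrow> 'v set
    \<Rightarrow> (('v \<Rightarrow> 'x) \<Rightarrow> 'x measure) \<Rightarrow> bool" where
  "is_rcd P M v C k \<longleftrightarrow> k \<in> PiM C M \<rightarrow>\<^sub>M prob_algebra (M v) \<and>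
     (\<forall>B \<in> sets (M v). \<forall>D \<in> sets (PiM C M).
        emeasure P {x \<in> space P. x v \<in> B \<and> restrict x C \<in> D}
        = (\<integral>\<^sup>+ x. indicator D (restrict x C) * emeasure (k (restrict x C)) B \<partial>P))"

fun iter_int :: "('v \<Rightarrow> 'v set \<Rightarrow> ('v \<Rightarrow> 'x) \<Rightarrow> 'x measure) \<Rightarrow> ('v \<Rightarrow> 'v set) \<Rightarrow> ('v \<Rightarrow> 'x set)
    \<Rightarrow> 'v list \<Rightarrow> ('v \<Rightarrow> 'x) \<Rightarrow> ennreal" where
  "iter_int K Cs B [] x = 1"
| "iter_int K Cs B (v # vs) x =
     (\<integral>\<^sup>+ y. indicator (B v) y * iter_int K Cs B vs (x(v := y)) \<partial>(K v (Cs v) (restrict x (Cs v))))"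

definition sorted_nodes :: "('v \<times> 'v) set \<Rightarrow> 'v set \<Rightarrow> 'v list" where
  "sorted_nodes r A = (SOME xs. set xs = A \<and> distinct xs \<and> sorted_wrt (\<lambda>a b. (a, b) \<in> r) xs)"

definition ordered_local_markov :: "'v hedg \<Rightarrow> ('v \<Rightarrow> 'x measure) \<Rightarrow> ('v \<Rightarrow> 'x) measure
    \<Rightarrow> ('v \<times> 'v) set \<Rightarrow> bool" where
  "ordered_local_markov G M P r \<longleftrightarrow>
     (\<forall>v \<in> nodes G. \<forall>A. ancestral (Pred_le G r v) A \<and> v \<in> A \<longrightarrow>
        cond_indep P M {v} (A - {v}) (moral_nbrs (induced (Pred_le G r v) A) v))"

definition recursive_factorization :: "'v hedg \<Rightarrow> ('v \<Rightarrow> 'x measure) \<Rightarrow> ('v \<Rightarrow> 'x) measure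
    \<Rightarrow> ('v \<times> 'v) set \<Rightarrow> ('v \<Rightarrow> 'v set \<Rightarrow> ('v \<Rightarrow> 'x) \<Rightarrow> 'x measure) \<Rightarrow> bool" where
  "recursive_factorization G M P r K \<longleftrightarrow>
     (\<forall>A B. ancestral G A \<and> (\<forall>v \<in> A. B v \<in> sets (M v)) \<longrightarrow>
        emeasure (distr P (PiM A M) (\<lambda>x. restrict x A)) (PiE A B)
        = iter_int K (pred_bd (induced G A) r) B (sorted_nodes r A) (\<lambda>_. undefined))"

end

theory Submission
  imports Defs
begin

(*
  Fix an ancestral set A, listed increasingly as w_1 < ... < w_n, and let C_i be the moral boundary
  of w_i in Pred_le of the HEDG induced on A. Both properties are equivalent to: for every such A,
  each K w_i C_i is a regular conditional distribution of X_{w_i} given all earlier coordinates,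
  i.e. the law of X_A is the composite of these kernels along the list.
  For the recursive factorization this is uniqueness of measures on rectangles plus induction along
  the list. For the ordered local Markov property it rests on two facts. If k is a regular conditional
  distribution of X_w given X_Z and Z is a subset of Y, then X_w and X_Y are conditionally independent
  given X_Z iff k, applied to the Z-part, is also a regular conditional distribution given X_Y. And the
  ancestral sets of Pred_le G r w containing w are exactly the sets A - {x. w < x} with A ancestral in
  G; removing w from such a set leaves the predecessors of w in A, and the moral boundary of w is C_i.
  The standard Borel hypothesis only serves to guarantee that the kernels K exist.
*)

section \<open>Kernel chains\<close>

fun is_kernel_chain :: "('v \<Rightarrow> ('v \<Rightarrow> 'x) \<Rightarrow> 'x measure) \<Rightarrow> ('v \<Rightarrow> 'x measure) \<Rightarrow> 'v set \<Rightarrow> 'v list \<Rightarrow> bool" where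
  "is_kernel_chain Kc M J [] = True"
| "is_kernel_chain Kc M J (v # vs) \<longleftrightarrow>
     v \<notin> J \<and> Kc v \<in> PiM J M \<rightarrow>\<^sub>M prob_algebra (M v) \<and> is_kernel_chain Kc M (insert v J) vs"

fun chain_measure :: "('v \<Rightarrow> ('v \<Rightarrow> 'x) \<Rightarrow> 'x measure) \<Rightarrow> ('v \<Rightarrow> 'x measure) \<Rightarrow> 'v set \<Rightarrow> 'v list
    \<Rightarrow> ('v \<Rightarrow> 'x) \<Rightarrow> ('v \<Rightarrow> 'x) measure" where
  "chain_measure Kc M J [] x = return (PiM J M) x"
| "chain_measure Kc M J (v # vs) x = Kc v x \<bind> (\<lambda>y. chain_measure Kc M (insert v J) vs (x(v := y)))"

fun chain_integral :: "('v \<Rightarrow> ('v \<Rightarrow> 'x) \<Rightarrow> 'x measure) \<Rightarrow> 'v list \<Rightarrow> (('v \<Rightarrow> 'x) \<Rightarrow> ennreal)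
    \<Rightarrow> ('v \<Rightarrow> 'x) \<Rightarrow> ennreal" where
  "chain_integral Kc [] f x = f x"
| "chain_integral Kc (v # vs) f x = (\<integral>\<^sup>+ y. chain_integral Kc vs f (x(v := y)) \<partial>Kc v x)"

lemma is_kernel_chain_append:
  "is_kernel_chain Kc M J (p @ q) \<longleftrightarrow> is_kernel_chain Kc M J p \<and> is_kernel_chain Kc M (J \<union> set p) q"
  by (induction p arbitrary: J) auto

lemma is_kernel_chain_distinct: "is_kernel_chain Kc M J vs \<Longrightarrow> distinct vs \<and> set vs \<inter> J = {}"
  by (induction vs arbitrary: J) fastforce+

lemma is_kernel_chainI:
  assumes "distinct vs" "set vs \<inter> J = {}"
    and "\<And>i. i < length vs \<Longrightarrow> Kc (vs ! i) \<in> PiM (J \<union> set (take i vs)) M \<rightarrow>\<^sub>M prob_algebra (M (vs ! i))"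
  shows "is_kernel_chain Kc M J vs"
  using assms
proof (induction vs arbitrary: J)
  case (Cons v vs)
  have "is_kernel_chain Kc M (insert v J) vs"
  proof (rule Cons.IH)
    fix i assume "i < length vs"
    then show "Kc (vs ! i) \<in> PiM (insert v J \<union> set (take i vs)) M \<rightarrow>\<^sub>M prob_algebra (M (vs ! i))"
      using Cons.prems(3)[of "Suc i"] by simp
  qed (use Cons.prems in auto)
  then show ?case using Cons.prems(2) Cons.prems(3)[of 0] by simp
qed simp

lemma space_PiM_fun_upd:
  "x \<in> space (PiM J M) \<Longrightarrow> y \<in> space (M v) \<Longrightarrow> x(v := y) \<in> space (PiM (insert v J) M)"
  by (auto simp: space_PiM PiE_iff extensional_def)

lemma is_kernel_chain_ConsD:
  assumes "is_kernel_chain Kc M J (v # vs)" "x \<in> space (PiM J M)"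
  shows "prob_space (Kc v x)" "sets (Kc v x) = sets (M v)" "space (Kc v x) = space (M v)"
proof -
  have "Kc v x \<in> space (prob_algebra (M v))" using assms by (auto intro: measurable_space)
  then show "prob_space (Kc v x)" "sets (Kc v x) = sets (M v)" "space (Kc v x) = space (M v)"
    by (auto simp: space_prob_algebra intro!: sets_eq_imp_space_eq)
qed

lemma chain_measure_measurable:
  "is_kernel_chain Kc M J vs \<Longrightarrow> chain_measure Kc M J vs \<in> PiM J M \<rightarrow>\<^sub>M prob_algebra (PiM (J \<union> set vs) M)"
proof (induction vs arbitrary: J)
  case (Cons v vs)
  have Kv: "Kc v \<in> PiM J M \<rightarrow>\<^sub>M prob_algebra (M v)" and vJ: "v \<notin> J"
    and chain: "is_kernel_chain Kc M (insert v J) vs"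
    using Cons.prems by auto
  have IH: "chain_measure Kc M (insert v J) vs \<in> PiM (insert v J) M \<rightarrow>\<^sub>M prob_algebra (PiM (J \<union> set (v # vs)) M)"
    using Cons.IH[OF chain] by simp
  have "(\<lambda>(x, y). x(v := y)) \<in> PiM J M \<Otimes>\<^sub>M M v \<rightarrow>\<^sub>M PiM (insert v J) M"
    by (rule measurable_add_dim)
  from measurable_compose[OF this IH]
  have "(\<lambda>(x, y). chain_measure Kc M (insert v J) vs (x(v := y)))
      \<in> PiM J M \<Otimes>\<^sub>M M v \<rightarrow>\<^sub>M prob_algebra (PiM (J \<union> set (v # vs)) M)"
    by (simp add: case_prod_unfold)
  then have sub: "chain_measure Kc M J (v # vs) \<in> PiM J M \<rightarrow>\<^sub>M subprob_algebra (PiM (J \<union> set (v # vs)) M)"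
    unfolding chain_measure.simps
    by (intro measurable_bind'[OF measurable_prob_algebraD[OF Kv]]) (simp add: measurable_prob_algebraD)
  show ?case
  proof (rule measurable_prob_algebraI[OF _ sub])
    fix x assume x: "x \<in> space (PiM J M)"
    note Kx = is_kernel_chain_ConsD[OF Cons.prems x]
    have "(\<lambda>y. chain_measure Kc M (insert v J) vs (x(v := y))) \<in> Kc v x \<rightarrow>\<^sub>M subprob_algebra (PiM (J \<union> set (v # vs)) M)"
      using measurable_compose[OF measurable_component_update[OF x vJ] measurable_prob_algebraD[OF IH]]
      by (simp add: measurable_cong_sets[OF Kx(2) refl])
    moreover have "AE y in Kc v x. prob_space (chain_measure Kc M (insert v J) vs (x(v := y)))"
      using measurable_space[OF IH space_PiM_fun_upd[OF x]] by (auto simp: Kx(3) space_prob_algebra)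
    ultimately show "prob_space (chain_measure Kc M J (v # vs) x)"
      using prob_space.prob_space_bind[OF Kx(1)] by simp
  qed
next
  case Nil
  have "chain_measure Kc M J [] = return (PiM J M)" by (rule ext) simp
  then show ?case by (simp add: measurable_return_prob_space)
qed

lemma
  assumes "is_kernel_chain Kc M J vs" "x \<in> space (PiM J M)"
  shows sets_chain_measure: "sets (chain_measure Kc M J vs x) = sets (PiM (J \<union> set vs) M)"
    and prob_space_chain_measure: "prob_space (chain_measure Kc M J vs x)"
  using measurable_space[OF chain_measure_measurable[OF assms(1)] assms(2)] by (auto simp: space_prob_algebra)

lemma nn_integral_chain_measure:
  assumes "is_kernel_chain Kc M J vs" "x \<in> space (PiM J M)" "f \<in> borel_measurable (PiM (J \<union> set vs) M)"
  shows "(\<integral>\<^sup>+ z. f z \<partial>chain_measure Kc M J vs x) = chain_integral Kc vs f x"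
  using assms
proof (induction vs arbitrary: J x)
  case (Cons v vs)
  have vJ: "v \<notin> J" and chain: "is_kernel_chain Kc M (insert v J) vs" using Cons.prems by auto
  note Kx = is_kernel_chain_ConsD[OF Cons.prems(1,2)]
  have "(\<lambda>y. chain_measure Kc M (insert v J) vs (x(v := y))) \<in> Kc v x \<rightarrow>\<^sub>M subprob_algebra (PiM (J \<union> set (v # vs)) M)"
    using measurable_compose[OF measurable_component_update[OF Cons.prems(2) vJ]
        measurable_prob_algebraD[OF chain_measure_measurable[OF chain]]]
    by (simp add: measurable_cong_sets[OF Kx(2) refl])
  from nn_integral_bind[OF Cons.prems(3) this]
  have "(\<integral>\<^sup>+ z. f z \<partial>chain_measure Kc M J (v # vs) x)
      = (\<integral>\<^sup>+ y. \<integral>\<^sup>+ z. f z \<partial>chain_measure Kc M (insert v J) vs (x(v := y)) \<partial>Kc v x)"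
    by simp
  also have "\<dots> = chain_integral Kc (v # vs) f x"
  proof (simp only: chain_integral.simps, rule nn_integral_cong)
    fix y assume "y \<in> space (Kc v x)"
    then have "x(v := y) \<in> space (PiM (insert v J) M)"
      using space_PiM_fun_upd[OF Cons.prems(2)] Kx(3) by simp
    then show "(\<integral>\<^sup>+ z. f z \<partial>chain_measure Kc M (insert v J) vs (x(v := y))) = chain_integral Kc vs f (x(v := y))"
      by (rule Cons.IH[OF chain]) (use Cons.prems(3) in simp)
  qed
  finally show ?case .
qed (simp add: nn_integral_return)

lemma chain_integral_cong:
  assumes "is_kernel_chain Kc M J vs" "x \<in> space (PiM J M)"
    and "\<And>z. z \<in> space (PiM (J \<union> set vs) M) \<Longrightarrow> f z = g z"
  shows "chain_integral Kc vs f x = chain_integral Kc vs g x"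
  using assms
proof (induction vs arbitrary: J x)
  case (Cons v vs)
  note Kx = is_kernel_chain_ConsD[OF Cons.prems(1,2)]
  show ?case
  proof (simp only: chain_integral.simps, rule nn_integral_cong)
    fix y assume "y \<in> space (Kc v x)"
    then have "x(v := y) \<in> space (PiM (insert v J) M)"
      using space_PiM_fun_upd[OF Cons.prems(2)] Kx(3) by simp
    then show "chain_integral Kc vs f (x(v := y)) = chain_integral Kc vs g (x(v := y))"
      by (rule Cons.IH[rotated]) (use Cons.prems in auto)
  qed
qed simp

lemma chain_integral_append: "chain_integral Kc (vs @ ws) f x = chain_integral Kc vs (chain_integral Kc ws f) x"
  by (induction vs arbitrary: x) auto

lemma chain_integral_one:
  assumes "is_kernel_chain Kc M J vs" "x \<in> space (PiM J M)"
  shows "chain_integral Kc vs (\<lambda>_. 1) x = 1"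
  using chain_integral_cong[OF assms, of "\<lambda>_. 1" "\<lambda>_. 1"]
    nn_integral_chain_measure[OF assms, of "\<lambda>_. 1"]
    prob_space.emeasure_space_1[OF prob_space_chain_measure[OF assms]]
  by simp

lemma chain_integral_indicator_mult:
  assumes "\<And>z u y. u \<in> set vs \<Longrightarrow> z(u := y) \<in> Q \<longleftrightarrow> z \<in> Q"
  shows "chain_integral Kc vs (\<lambda>z. indicator Q z * f z) x = indicator Q x * chain_integral Kc vs f x"
  using assms
proof (induction vs arbitrary: x)
  case (Cons v vs)
  have "chain_integral Kc (v # vs) (\<lambda>z. indicator Q z * f z) x
      = (\<integral>\<^sup>+ y. indicator Q (x(v := y)) * chain_integral Kc vs f (x(v := y)) \<partial>Kc v x)"
    using Cons.IH Cons.prems by simp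
  also have "\<dots> = (\<integral>\<^sup>+ y. indicator Q x * chain_integral Kc vs f (x(v := y)) \<partial>Kc v x)"
    using Cons.prems[where u=v] by (simp add: indicator_def del: fun_upd_apply)
  finally show ?case by (cases "x \<in> Q") auto
qed simp

lemma space_PiM_empty_undefined: "(\<lambda>_. undefined) \<in> space (PiM {} M)"
  by (simp add: space_PiM)

lemma measurable_emeasure_kernel:
  assumes "k \<in> L \<rightarrow>\<^sub>M prob_algebra N" "B \<in> sets N"
  shows "(\<lambda>z. emeasure (k z) B) \<in> borel_measurable L"
  by (rule measurable_compose[OF measurable_prob_algebraD[OF assms(1)] measurable_emeasure_subprob_algebra[OF assms(2)]])

lemma measure_eqI_PiM_rectangles:
  assumes "finite Y" "sets Q1 = sets (PiM Y M)" "sets Q2 = sets (PiM Y M)"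
    and "emeasure Q1 (space (PiM Y M)) \<noteq> \<infinity>"
    and "\<And>E. (\<And>u. u \<in> Y \<Longrightarrow> E u \<in> sets (M u)) \<Longrightarrow> emeasure Q1 (PiE Y E) = emeasure Q2 (PiE Y E)"
  shows "Q1 = Q2"
proof (rule measure_eqI_PiM_finite[OF assms(1,2,3)])
  show "range (\<lambda>_. space (PiM Y M)) \<subseteq> prod_algebra Y M"
    using space_in_prod_algebra[of Y M] by (auto simp: space_PiM)
qed (use assms in auto)

lemma emeasure_chain_measure_snoc:
  assumes chain: "is_kernel_chain Kc M {} (p @ [w])"
    and E: "\<And>u. u \<in> insert w (set p) \<Longrightarrow> E u \<in> sets (M u)"
  shows "emeasure (chain_measure Kc M {} (p @ [w]) (\<lambda>_. undefined)) (PiE (insert w (set p)) E)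
    = (\<integral>\<^sup>+z. indicator (PiE (set p) E) z * emeasure (Kc w z) (E w) \<partial>chain_measure Kc M {} p (\<lambda>_. undefined))"
proof -
  let ?x0 = "\<lambda>_. undefined"
  have chain_p: "is_kernel_chain Kc M {} p" and Kw: "Kc w \<in> PiM (set p) M \<rightarrow>\<^sub>M prob_algebra (M w)"
    and wp: "w \<notin> set p"
    using chain by (auto simp: is_kernel_chain_append)
  have PiE_sets: "PiE (insert w (set p)) E \<in> sets (PiM ({} \<union> set (p @ [w])) M)"
    "PiE (set p) E \<in> sets (PiM ({} \<union> set p) M)"
    by (auto intro!: sets_PiM_I_finite E)
  have "emeasure (chain_measure Kc M {} (p @ [w]) ?x0) (PiE (insert w (set p)) E)
      = (\<integral>\<^sup>+z. indicator (PiE (insert w (set p)) E) z \<partial>chain_measure Kc M {} (p @ [w]) ?x0)"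
    using PiE_sets(1) sets_chain_measure[OF chain space_PiM_empty_undefined] by simp
  also have "\<dots> = chain_integral Kc (p @ [w]) (indicator (PiE (insert w (set p)) E)) ?x0"
    by (rule nn_integral_chain_measure[OF chain space_PiM_empty_undefined]) (use PiE_sets(1) in simp)
  also have "\<dots> = chain_integral Kc p (\<lambda>z. indicator (PiE (set p) E) z * emeasure (Kc w z) (E w)) ?x0"
    unfolding chain_integral_append
  proof (rule chain_integral_cong[OF chain_p space_PiM_empty_undefined])
    fix z assume z: "z \<in> space (PiM ({} \<union> set p) M)"
    have "sets (Kc w z) = sets (M w)" using measurable_space[OF Kw] z by (auto simp: space_prob_algebra)
    moreover have "indicator (PiE (insert w (set p)) E) (z(w := y))
        = indicator (PiE (set p) E) z * (indicator (E w) y :: ennreal)" for y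
      using z wp by (auto simp: indicator_def space_PiM PiE_iff extensional_def)
    ultimately show "chain_integral Kc [w] (indicator (PiE (insert w (set p)) E)) z
        = indicator (PiE (set p) E) z * emeasure (Kc w z) (E w)"
      using E by (simp add: nn_integral_cmult_indicator)
  qed
  also have "\<dots> = (\<integral>\<^sup>+z. indicator (PiE (set p) E) z * emeasure (Kc w z) (E w) \<partial>chain_measure Kc M {} p ?x0)"
    by (rule nn_integral_chain_measure[OF chain_p space_PiM_empty_undefined, symmetric])
      (use PiE_sets(2) measurable_emeasure_kernel[OF Kw E[of w]] in simp)
  finally show ?thesis .
qed

lemma chain_integral_append_indicator:
  assumes chain: "is_kernel_chain Kc M J (p @ q)" and x: "x \<in> space (PiM J M)"
    and Q: "\<And>z u y. u \<in> set q \<Longrightarrow> z(u := y) \<in> Q \<longleftrightarrow> z \<in> Q"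
  shows "chain_integral Kc (p @ q) (indicator Q) x = chain_integral Kc p (indicator Q) x"
  unfolding chain_integral_append
proof (rule chain_integral_cong)
  show "is_kernel_chain Kc M J p" using chain by (simp add: is_kernel_chain_append)
  fix z assume "z \<in> space (PiM (J \<union> set p) M)"
  then show "chain_integral Kc q (indicator Q) z = indicator Q z"
    using chain_integral_indicator_mult[of q Q Kc "\<lambda>_. 1", OF Q] chain_integral_one[of Kc M "J \<union> set p" q]
      chain by (simp add: is_kernel_chain_append)
qed (rule x)

lemma distr_chain_measure_prefix:
  assumes chain: "is_kernel_chain Kc M {} (p @ q)"
  shows "distr (chain_measure Kc M {} (p @ q) (\<lambda>_. undefined)) (PiM (set p) M) (\<lambda>z. restrict z (set p))
    = chain_measure Kc M {} p (\<lambda>_. undefined)"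
proof -
  let ?x0 = "\<lambda>_. undefined" and ?pq = "chain_measure Kc M {} (p @ q) (\<lambda>_. undefined)"
  have chain_p: "is_kernel_chain Kc M {} p" using chain by (simp add: is_kernel_chain_append)
  have disj: "set p \<inter> set q = {}" using is_kernel_chain_distinct[OF chain] by simp
  have restr: "(\<lambda>z. restrict z (set p)) \<in> ?pq \<rightarrow>\<^sub>M PiM (set p) M"
    using sets_chain_measure[OF chain space_PiM_empty_undefined]
    by (simp add: measurable_cong_sets[of ?pq _ "PiM (set p) M" "PiM (set p) M"] measurable_restrict_subset)
  show ?thesis
  proof (rule measure_eqI_PiM_rectangles)
    show "sets (chain_measure Kc M {} p ?x0) = sets (PiM (set p) M)"
      using sets_chain_measure[OF chain_p space_PiM_empty_undefined] by simp
    show "emeasure (distr ?pq (PiM (set p) M) (\<lambda>z. restrict z (set p))) (space (PiM (set p) M)) \<noteq> \<infinity>"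
      using prob_space.emeasure_space_1[OF prob_space.prob_space_distr[OF
          prob_space_chain_measure[OF chain space_PiM_empty_undefined] restr]]
      by simp
    fix E assume E: "\<And>u. u \<in> set p \<Longrightarrow> E u \<in> sets (M u)"
    have PiE_sets: "PiE (set p) E \<in> sets (PiM (set p) M)" by (auto intro!: sets_PiM_I_finite E)
    define Q where "Q = {z. restrict z (set p) \<in> PiE (set p) E}"
    have Q_indicator: "indicator Q = (\<lambda>z. indicator (PiE (set p) E) (restrict z (set p)) :: ennreal)"
      by (auto simp: Q_def indicator_def)
    have Q_measurable: "(indicator Q :: _ \<Rightarrow> ennreal) \<in> borel_measurable (PiM A M)" if "set p \<subseteq> A" for A
      unfolding Q_indicator using PiE_sets by (intro measurable_compose[OF measurable_restrict_subset[OF that]]) simp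
    have "emeasure (distr ?pq (PiM (set p) M) (\<lambda>z. restrict z (set p))) (PiE (set p) E)
        = (\<integral>\<^sup>+z. indicator Q z \<partial>?pq)"
      using PiE_sets by (simp add: nn_integral_distr[OF restr, symmetric] Q_indicator)
    also have "\<dots> = chain_integral Kc (p @ q) (indicator Q) ?x0"
      using nn_integral_chain_measure[OF chain space_PiM_empty_undefined] Q_measurable by simp
    also have "\<dots> = chain_integral Kc p (indicator Q) ?x0"
    proof (rule chain_integral_append_indicator[OF chain space_PiM_empty_undefined])
      fix z :: "'a \<Rightarrow> 'b" and u y assume "u \<in> set q"
      then have "restrict (z(u := y)) (set p) = restrict z (set p)" using disj by (intro restrict_fupd) auto
      then show "z(u := y) \<in> Q \<longleftrightarrow> z \<in> Q" by (simp only: Q_def mem_Collect_eq)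
    qed
    also have "\<dots> = (\<integral>\<^sup>+z. indicator Q z \<partial>chain_measure Kc M {} p ?x0)"
      using nn_integral_chain_measure[OF chain_p space_PiM_empty_undefined] Q_measurable by simp
    also have "\<dots> = (\<integral>\<^sup>+z. indicator (PiE (set p) E) z \<partial>chain_measure Kc M {} p ?x0)"
      using sets_eq_imp_space_eq[OF sets_chain_measure[OF chain_p space_PiM_empty_undefined]]
      by (intro nn_integral_cong) (simp add: Q_indicator space_PiM PiE_def extensional_restrict)
    also have "\<dots> = emeasure (chain_measure Kc M {} p ?x0) (PiE (set p) E)"
      using PiE_sets sets_chain_measure[OF chain_p space_PiM_empty_undefined] by simp
    finally show "emeasure (distr ?pq (PiM (set p) M) (\<lambda>z. restrict z (set p))) (PiE (set p) E)
        = emeasure (chain_measure Kc M {} p ?x0) (PiE (set p) E)" .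
  qed simp_all
qed

definition restricted_kernel :: "('v \<Rightarrow> 'v set \<Rightarrow> ('v \<Rightarrow> 'x) \<Rightarrow> 'x measure) \<Rightarrow> ('v \<Rightarrow> 'v set)
    \<Rightarrow> 'v \<Rightarrow> ('v \<Rightarrow> 'x) \<Rightarrow> 'x measure" where
  "restricted_kernel K Cs u x = K u (Cs u) (restrict x (Cs u))"

lemma iter_int_eq_chain_integral:
  "distinct vs \<Longrightarrow>
    iter_int K Cs B vs x = chain_integral (restricted_kernel K Cs) vs (indicator {z. \<forall>u\<in>set vs. z u \<in> B u}) x"
proof (induction vs arbitrary: x)
  case (Cons v vs)
  let ?Q = "{z. \<forall>u\<in>set vs. z u \<in> B u}"
  have "indicator {z. \<forall>u\<in>set (v # vs). z u \<in> B u} = (\<lambda>z. indicator {z. z v \<in> B v} z * indicator ?Q z :: ennreal)"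
    by (auto simp: indicator_def fun_eq_iff)
  moreover have "chain_integral (restricted_kernel K Cs) vs (\<lambda>z. indicator {z. z v \<in> B v} z * indicator ?Q z) (x(v := y))
      = indicator (B v) y * chain_integral (restricted_kernel K Cs) vs (indicator ?Q) (x(v := y))" for y
    using Cons.prems by (subst chain_integral_indicator_mult) (auto simp: indicator_def)
  ultimately show ?case
    using Cons by (simp add: restricted_kernel_def[of K Cs v])
qed simp

lemma emeasure_chain_measure_PiE:
  assumes chain: "is_kernel_chain (restricted_kernel K Cs) M {} vs"
    and B: "\<And>u. u \<in> set vs \<Longrightarrow> B u \<in> sets (M u)"
  shows "emeasure (chain_measure (restricted_kernel K Cs) M {} vs (\<lambda>_. undefined)) (PiE (set vs) B)
    = iter_int K Cs B vs (\<lambda>_. undefined)"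
proof -
  let ?Kc = "restricted_kernel K Cs" and ?x0 = "\<lambda>_. undefined"
  have PiE_sets: "PiE (set vs) B \<in> sets (PiM ({} \<union> set vs) M)" by (auto intro!: sets_PiM_I_finite B)
  have "emeasure (chain_measure ?Kc M {} vs ?x0) (PiE (set vs) B)
      = (\<integral>\<^sup>+z. indicator (PiE (set vs) B) z \<partial>chain_measure ?Kc M {} vs ?x0)"
    using PiE_sets sets_chain_measure[OF chain space_PiM_empty_undefined] by simp
  also have "\<dots> = chain_integral ?Kc vs (indicator (PiE (set vs) B)) ?x0"
    by (rule nn_integral_chain_measure[OF chain space_PiM_empty_undefined]) (use PiE_sets in simp)
  also have "\<dots> = chain_integral ?Kc vs (indicator {z. \<forall>u\<in>set vs. z u \<in> B u}) ?x0"
    by (rule chain_integral_cong[OF chain space_PiM_empty_undefined])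
      (auto simp: space_PiM PiE_iff indicator_def)
  also have "\<dots> = iter_int K Cs B vs ?x0"
    using is_kernel_chain_distinct[OF chain] by (simp add: iter_int_eq_chain_integral)
  finally show ?thesis .
qed

section \<open>Regular conditional distributions along a chain\<close>

lemma measurable_restrict_of_sets_eq:
  "sets P = sets (PiM I M) \<Longrightarrow> Y \<subseteq> I \<Longrightarrow> (\<lambda>x. restrict x Y) \<in> P \<rightarrow>\<^sub>M PiM Y M"
  using measurable_restrict_subset[of Y I M] measurable_cong_sets[of P "PiM I M" "PiM Y M" "PiM Y M"] by simp

lemma measurable_component_of_sets_eq:
  "sets P = sets (PiM I M) \<Longrightarrow> w \<in> I \<Longrightarrow> (\<lambda>x. x w) \<in> P \<rightarrow>\<^sub>M M w"
  using measurable_component_singleton[of w I M] measurable_cong_sets[of P "PiM I M" "M w" "M w"] by simp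

lemma sets_component_preimage:
  assumes "sets P = sets (PiM I M)" "w \<in> I" "B \<in> sets (M w)"
  shows "{x \<in> space P. x w \<in> B} \<in> sets P"
  using measurable_sets[OF measurable_component_of_sets_eq[OF assms(1,2)] assms(3)]
  by (simp add: vimage_def Int_def conj_commute)

lemma emeasure_distr_density_restrict:
  assumes sP: "sets P = sets (PiM I M)" and Y: "Y \<subseteq> I"
    and f: "f \<in> borel_measurable P" and T: "T \<in> sets (PiM Y M)"
  shows "emeasure (distr (density P f) (PiM Y M) (\<lambda>x. restrict x Y)) T
    = (\<integral>\<^sup>+x. f x * indicator T (restrict x Y) \<partial>P)"
proof -
  note restr = measurable_restrict_of_sets_eq[OF sP Y]
  have "emeasure (distr (density P f) (PiM Y M) (\<lambda>x. restrict x Y)) T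
      = emeasure (density P f) ((\<lambda>x. restrict x Y) -` T \<inter> space P)"
    using restr T by (simp add: emeasure_distr measurable_cong_sets[OF sets_density refl])
  also have "\<dots> = (\<integral>\<^sup>+x. f x * indicator T (restrict x Y) \<partial>P)"
    using measurable_sets[OF restr T] f
    by (simp add: emeasure_density indicator_def cong: nn_integral_cong_simp)
  finally show ?thesis .
qed

lemma emeasure_distr_density_indicator_restrict:
  assumes sP: "sets P = sets (PiM I M)" and Y: "Y \<subseteq> I" and S: "S \<in> sets P" and T: "T \<in> sets (PiM Y M)"
  shows "emeasure (distr (density P (indicator S)) (PiM Y M) (\<lambda>x. restrict x Y)) T
    = emeasure P (S \<inter> {x \<in> space P. restrict x Y \<in> T})"
proof -
  have "S \<inter> {x \<in> space P. restrict x Y \<in> T} \<in> sets P"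
    using S measurable_sets[OF measurable_restrict_of_sets_eq[OF sP Y] T] by (simp add: vimage_def Int_def conj_commute)
  moreover have "(\<integral>\<^sup>+x. indicator S x * indicator T (restrict x Y) \<partial>P)
      = (\<integral>\<^sup>+x. indicator (S \<inter> {x \<in> space P. restrict x Y \<in> T}) x \<partial>P)"
    by (intro nn_integral_cong) (simp add: indicator_def)
  ultimately show ?thesis
    using emeasure_distr_density_restrict[OF sP Y borel_measurable_indicator[OF S] T] by simp
qed

lemma is_rcd_of_rectangles:
  assumes P: "prob_space P" and sP: "sets P = sets (PiM I M)" and w: "w \<in> I"
    and Y: "finite Y" "Y \<subseteq> I" and k: "k \<in> PiM Y M \<rightarrow>\<^sub>M prob_algebra (M w)"
    and rect: "\<And>B E. B \<in> sets (M w) \<Longrightarrow> (\<And>u. u \<in> Y \<Longrightarrow> E u \<in> sets (M u)) \<Longrightarrow>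
       emeasure P {x \<in> space P. x w \<in> B \<and> restrict x Y \<in> PiE Y E}
       = (\<integral>\<^sup>+x. indicator (PiE Y E) (restrict x Y) * emeasure (k (restrict x Y)) B \<partial>P)"
  shows "is_rcd P M w Y k"
  unfolding is_rcd_def
proof (intro conjI k ballI)
  fix B D assume B: "B \<in> sets (M w)" and D: "D \<in> sets (PiM Y M)"
  define S where "S = {x \<in> space P. x w \<in> B}"
  have S: "S \<in> sets P" unfolding S_def by (rule sets_component_preimage[OF sP w B])
  have kB: "(\<lambda>x. emeasure (k (restrict x Y)) B) \<in> borel_measurable P"
    by (rule measurable_compose[OF measurable_restrict_of_sets_eq[OF sP Y(2)] measurable_emeasure_kernel[OF k B]])
  define \<nu>1 where "\<nu>1 = distr (density P (indicator S)) (PiM Y M) (\<lambda>x. restrict x Y)"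
  define \<nu>2 where "\<nu>2 = distr (density P (\<lambda>x. emeasure (k (restrict x Y)) B)) (PiM Y M) (\<lambda>x. restrict x Y)"
  have \<nu>1: "emeasure \<nu>1 T = emeasure P {x \<in> space P. x w \<in> B \<and> restrict x Y \<in> T}"
    if "T \<in> sets (PiM Y M)" for T
    unfolding \<nu>1_def emeasure_distr_density_indicator_restrict[OF sP Y(2) S that]
    by (auto simp: S_def intro!: arg_cong[where f="emeasure P"])
  have \<nu>2: "emeasure \<nu>2 T = (\<integral>\<^sup>+x. indicator T (restrict x Y) * emeasure (k (restrict x Y)) B \<partial>P)"
    if "T \<in> sets (PiM Y M)" for T
    unfolding \<nu>2_def emeasure_distr_density_restrict[OF sP Y(2) kB that] by (simp add: mult.commute)
  have "\<nu>1 = \<nu>2"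
  proof (rule measure_eqI_PiM_rectangles[OF Y(1)])
    show "emeasure \<nu>1 (space (PiM Y M)) \<noteq> \<infinity>"
      using \<nu>1[OF sets.top] finite_measure.emeasure_finite[OF prob_space.finite_measure[OF P]] by simp
    fix E assume "\<And>u. u \<in> Y \<Longrightarrow> E u \<in> sets (M u)"
    then show "emeasure \<nu>1 (PiE Y E) = emeasure \<nu>2 (PiE Y E)"
      using \<nu>1 \<nu>2 rect[OF B] Y by (simp add: sets_PiM_I_finite)
  qed (simp_all add: \<nu>1_def \<nu>2_def)
  then show "emeasure P {x \<in> space P. x w \<in> B \<and> restrict x Y \<in> D}
      = (\<integral>\<^sup>+x. indicator D (restrict x Y) * emeasure (k (restrict x Y)) B \<partial>P)"
    using \<nu>1[OF D] \<nu>2[OF D] by simp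
qed

lemma is_rcd_iff_rectangles:
  assumes P: "prob_space P" and sP: "sets P = sets (PiM I M)" and w: "w \<in> I"
    and Y: "finite Y" "Y \<subseteq> I" and k: "k \<in> PiM Y M \<rightarrow>\<^sub>M prob_algebra (M w)"
  shows "is_rcd P M w Y k \<longleftrightarrow>
    (\<forall>B \<in> sets (M w). \<forall>E. (\<forall>u\<in>Y. E u \<in> sets (M u)) \<longrightarrow>
       emeasure P {x \<in> space P. x w \<in> B \<and> restrict x Y \<in> PiE Y E}
       = (\<integral>\<^sup>+x. indicator (PiE Y E) (restrict x Y) * emeasure (k (restrict x Y)) B \<partial>P))"
proof (intro iffI ballI allI impI)
  fix B E assume rcd: "is_rcd P M w Y k" and B: "B \<in> sets (M w)" and E: "\<forall>u\<in>Y. E u \<in> sets (M u)"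
  have "PiE Y E \<in> sets (PiM Y M)" using E Y by (auto intro!: sets_PiM_I_finite)
  then show "emeasure P {x \<in> space P. x w \<in> B \<and> restrict x Y \<in> PiE Y E}
      = (\<integral>\<^sup>+x. indicator (PiE Y E) (restrict x Y) * emeasure (k (restrict x Y)) B \<partial>P)"
    using rcd B unfolding is_rcd_def by blast
qed (rule is_rcd_of_rectangles[OF assms], blast)

lemma distr_PiM_empty:
  assumes "prob_space P" "f \<in> P \<rightarrow>\<^sub>M PiM {} M"
  shows "distr P (PiM {} M) f = return (PiM {} M) (\<lambda>_. undefined)"
proof (rule measure_eqI_PiM_rectangles)
  note distr_space = prob_space.emeasure_space_1[OF prob_space.prob_space_distr[OF assms]]
  then show "emeasure (distr P (PiM {} M) f) (space (PiM {} M)) \<noteq> \<infinity>" by simp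
  fix E
  have "space (PiM {} M) = {\<lambda>_. undefined}" by (simp add: space_PiM)
  then show "emeasure (distr P (PiM {} M) f) (PiE {} E) = emeasure (return (PiM {} M) (\<lambda>_. undefined)) (PiE {} E)"
    using distr_space sets.top[of "PiM {} M"] by simp
qed simp_all

lemma measure_eq_iff_PiM_rectangles:
  assumes "finite Y" "sets Q1 = sets (PiM Y M)" "sets Q2 = sets (PiM Y M)"
    and "emeasure Q1 (space (PiM Y M)) \<noteq> \<infinity>"
  shows "Q1 = Q2 \<longleftrightarrow> (\<forall>E. (\<forall>u\<in>Y. E u \<in> sets (M u)) \<longrightarrow> emeasure Q1 (PiE Y E) = emeasure Q2 (PiE Y E))"
  using measure_eqI_PiM_rectangles[OF assms] by auto

lemma all_rectangles_insert_iff: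
  assumes "w \<notin> Y"
  shows "(\<forall>E. (\<forall>u\<in>insert w Y. E u \<in> sets (M u)) \<longrightarrow> \<Phi> (E w) (PiE Y E))
    \<longleftrightarrow> (\<forall>B \<in> sets (M w). \<forall>E. (\<forall>u\<in>Y. E u \<in> sets (M u)) \<longrightarrow> \<Phi> B (PiE Y E))"
proof safe
  fix B E assume "\<forall>E. (\<forall>u\<in>insert w Y. E u \<in> sets (M u)) \<longrightarrow> \<Phi> (E w) (PiE Y E)"
    and "B \<in> sets (M w)" "\<forall>u\<in>Y. E u \<in> sets (M u)"
  moreover have "PiE Y (E(w := B)) = PiE Y E" using assms by (intro PiE_cong) auto
  ultimately show "\<Phi> B (PiE Y E)" by (metis fun_upd_apply insert_iff)
qed auto

lemma distr_restrict_snoc_iff_is_rcd: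
  assumes P: "prob_space P" and sP: "sets P = sets (PiM I M)" and pw: "insert w (set p) \<subseteq> I"
    and chain: "is_kernel_chain Kc M {} (p @ [w])"
    and marg: "distr P (PiM (set p) M) (\<lambda>x. restrict x (set p)) = chain_measure Kc M {} p (\<lambda>_. undefined)"
  shows "distr P (PiM (set (p @ [w])) M) (\<lambda>x. restrict x (set (p @ [w])))
      = chain_measure Kc M {} (p @ [w]) (\<lambda>_. undefined)
    \<longleftrightarrow> is_rcd P M w (set p) (Kc w)"
proof -
  let ?D = "distr P (PiM (insert w (set p)) M) (\<lambda>x. restrict x (insert w (set p)))"
    and ?C = "chain_measure Kc M {} (p @ [w]) (\<lambda>_. undefined)"
  let ?\<Phi> = "\<lambda>B T. emeasure P {x \<in> space P. x w \<in> B \<and> restrict x (set p) \<in> T}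
    = (\<integral>\<^sup>+x. indicator T (restrict x (set p)) * emeasure (Kc w (restrict x (set p))) B \<partial>P)"
  have Kw: "Kc w \<in> PiM (set p) M \<rightarrow>\<^sub>M prob_algebra (M w)" and wp: "w \<notin> set p"
    using chain by (auto simp: is_kernel_chain_append)
  note restr = measurable_restrict_of_sets_eq[OF sP]
  have rect: "emeasure ?D (PiE (insert w (set p)) E) = emeasure ?C (PiE (insert w (set p)) E)
      \<longleftrightarrow> ?\<Phi> (E w) (PiE (set p) E)"
    if E: "\<And>u. u \<in> insert w (set p) \<Longrightarrow> E u \<in> sets (M u)" for E
  proof -
    have PiE_sets: "PiE (insert w (set p)) E \<in> sets (PiM (insert w (set p)) M)" "PiE (set p) E \<in> sets (PiM (set p) M)"
      by (auto intro!: sets_PiM_I_finite E)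
    have "emeasure ?D (PiE (insert w (set p)) E)
        = emeasure P {x \<in> space P. x w \<in> E w \<and> restrict x (set p) \<in> PiE (set p) E}"
      using pw by (subst emeasure_distr[OF restr PiE_sets(1)]) (auto intro!: arg_cong[where f="emeasure P"] simp: PiE_iff)
    moreover have "emeasure ?C (PiE (insert w (set p)) E)
        = (\<integral>\<^sup>+z. indicator (PiE (set p) E) z * emeasure (Kc w z) (E w) \<partial>distr P (PiM (set p) M) (\<lambda>x. restrict x (set p)))"
      unfolding marg by (rule emeasure_chain_measure_snoc[OF chain E])
    moreover have "\<dots> = (\<integral>\<^sup>+x. indicator (PiE (set p) E) (restrict x (set p))
        * emeasure (Kc w (restrict x (set p))) (E w) \<partial>P)"
      using pw PiE_sets(2) measurable_emeasure_kernel[OF Kw E[of w]] by (intro nn_integral_distr[OF restr]) auto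
    ultimately show ?thesis by simp
  qed
  have "?D = ?C \<longleftrightarrow> (\<forall>E. (\<forall>u\<in>insert w (set p). E u \<in> sets (M u)) \<longrightarrow>
      emeasure ?D (PiE (insert w (set p)) E) = emeasure ?C (PiE (insert w (set p)) E))"
    using prob_space.emeasure_space_1[OF prob_space.prob_space_distr[OF P restr]] pw
      sets_chain_measure[OF chain space_PiM_empty_undefined]
    by (intro measure_eq_iff_PiM_rectangles) auto
  also have "\<dots> \<longleftrightarrow> (\<forall>E. (\<forall>u\<in>insert w (set p). E u \<in> sets (M u)) \<longrightarrow> ?\<Phi> (E w) (PiE (set p) E))"
    using rect by blast
  also have "\<dots> \<longleftrightarrow> (\<forall>B \<in> sets (M w). \<forall>E. (\<forall>u\<in>set p. E u \<in> sets (M u)) \<longrightarrow> ?\<Phi> B (PiE (set p) E))"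
    by (rule all_rectangles_insert_iff[OF wp])
  also have "\<dots> \<longleftrightarrow> is_rcd P M w (set p) (Kc w)"
    using is_rcd_iff_rectangles[OF P sP _ _ _ Kw] pw by simp
  finally show ?thesis by simp
qed

lemma distr_restrict_prefix:
  assumes sP: "sets P = sets (PiM I M)" and pq: "set (p @ q) \<subseteq> I" and chain: "is_kernel_chain Kc M {} (p @ q)"
    and joint: "distr P (PiM (set (p @ q)) M) (\<lambda>x. restrict x (set (p @ q)))
      = chain_measure Kc M {} (p @ q) (\<lambda>_. undefined)"
  shows "distr P (PiM (set p) M) (\<lambda>x. restrict x (set p)) = chain_measure Kc M {} p (\<lambda>_. undefined)"
proof -
  have "distr P (PiM (set p) M) (\<lambda>x. restrict x (set p))
      = distr (distr P (PiM (set (p @ q)) M) (\<lambda>x. restrict x (set (p @ q)))) (PiM (set p) M) (\<lambda>z. restrict z (set p))"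
    using pq measurable_restrict_of_sets_eq[OF sP]
    by (subst distr_distr) (auto intro!: distr_cong measurable_restrict_subset)
  also have "\<dots> = chain_measure Kc M {} p (\<lambda>_. undefined)"
    unfolding joint by (rule distr_chain_measure_prefix[OF chain])
  finally show ?thesis .
qed

lemma distr_restrict_eq_chain_measure_iff:
  assumes P: "prob_space P" and sP: "sets P = sets (PiM I M)"
  shows "set ws \<subseteq> I \<Longrightarrow> is_kernel_chain Kc M {} ws \<Longrightarrow>
    distr P (PiM (set ws) M) (\<lambda>x. restrict x (set ws)) = chain_measure Kc M {} ws (\<lambda>_. undefined)
    \<longleftrightarrow> (\<forall>i < length ws. is_rcd P M (ws ! i) (set (take i ws)) (Kc (ws ! i)))"
proof (induction ws rule: rev_induct)
  case Nil
  show ?case using distr_PiM_empty[OF P measurable_restrict_of_sets_eq[OF sP, of "{}"]] by (simp add: restrict_def)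
next
  case (snoc w p)
  have IH: "distr P (PiM (set p) M) (\<lambda>x. restrict x (set p)) = chain_measure Kc M {} p (\<lambda>_. undefined)
      \<longleftrightarrow> (\<forall>i < length p. is_rcd P M (p ! i) (set (take i p)) (Kc (p ! i)))"
    by (rule snoc.IH) (use snoc.prems in \<open>auto simp: is_kernel_chain_append\<close>)
  have "(\<forall>i < length (p @ [w]). is_rcd P M ((p @ [w]) ! i) (set (take i (p @ [w]))) (Kc ((p @ [w]) ! i)))
      \<longleftrightarrow> (\<forall>i < length p. is_rcd P M (p ! i) (set (take i p)) (Kc (p ! i))) \<and> is_rcd P M w (set p) (Kc w)"
    by (auto simp: less_Suc_eq nth_append)
  moreover have "insert w (set p) \<subseteq> I" using snoc.prems(1) by simp
  note snoc_iff = distr_restrict_snoc_iff_is_rcd[OF P sP this snoc.prems(2)]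
  ultimately show ?case using IH distr_restrict_prefix[OF sP snoc.prems] snoc_iff by blast
qed

section \<open>Conditional independence and regular conditional distributions\<close>

lemma restrict_in_space_PiM_of_sets_eq:
  assumes "sets P = sets (PiM I M)" "x \<in> space P" "Y \<subseteq> I"
  shows "restrict x Y \<in> space (PiM Y M)"
  using assms(2,3) sets_eq_imp_space_eq[OF assms(1)] by (auto simp: space_PiM PiE_iff)

lemma sets_coord_algebra:
  assumes "sets P = sets (PiM I M)" "Z \<subseteq> I"
  shows "sets (coord_algebra P M Z) = {(\<lambda>x. restrict x Z) -` D \<inter> space P | D. D \<in> sets (PiM Z M)}"
  using restrict_in_space_PiM_of_sets_eq[OF assms(1) _ assms(2)]
  by (auto simp: coord_algebra_def sets_vimage_algebra2 intro: Pi_I)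

lemma coord_algebra_preimage_in_sets:
  assumes "sets P = sets (PiM I M)" "Z \<subseteq> I" "T \<in> sets (PiM Z M)"
  shows "{x \<in> space P. restrict x Z \<in> T} \<in> sets (coord_algebra P M Z)"
  using assms by (auto simp: sets_coord_algebra)

lemma subalgebra_coord_algebra:
  assumes "sets P = sets (PiM I M)" "Z \<subseteq> I"
  shows "subalgebra P (coord_algebra P M Z)"
  using measurable_sets[OF measurable_restrict_of_sets_eq[OF assms]]
  by (auto simp: subalgebra_def sets_coord_algebra[OF assms]) (simp_all add: coord_algebra_def)

lemma subalgebra_coord_algebra_mono:
  assumes sP: "sets P = sets (PiM I M)" and "Z \<subseteq> Y" "Y \<subseteq> I"
  shows "subalgebra (coord_algebra P M Y) (coord_algebra P M Z)"
  unfolding subalgebra_def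
proof (intro conjI subsetI)
  fix A assume "A \<in> sets (coord_algebra P M Z)"
  then obtain D where D: "D \<in> sets (PiM Z M)" and A: "A = (\<lambda>x. restrict x Z) -` D \<inter> space P"
    using assms by (auto simp: sets_coord_algebra)
  have "(\<lambda>z. restrict z Z) -` D \<inter> space (PiM Y M) \<in> sets (PiM Y M)"
    using measurable_sets[OF measurable_restrict_subset[OF \<open>Z \<subseteq> Y\<close>] D] .
  moreover have "A = (\<lambda>x. restrict x Y) -` ((\<lambda>z. restrict z Z) -` D \<inter> space (PiM Y M)) \<inter> space P"
    using A assms restrict_in_space_PiM_of_sets_eq[OF sP] by (auto simp: Int_absorb1)
  ultimately show "A \<in> sets (coord_algebra P M Y)"
    using assms(1,3) by (subst sets_coord_algebra) blast+
qed (simp add: coord_algebra_def)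

lemma measurable_coord_algebra:
  assumes "sets P = sets (PiM I M)" "Z \<subseteq> I" "h \<in> PiM Z M \<rightarrow>\<^sub>M N"
  shows "(\<lambda>x. h (restrict x Z)) \<in> coord_algebra P M Z \<rightarrow>\<^sub>M N"
  unfolding coord_algebra_def
  using restrict_in_space_PiM_of_sets_eq[OF assms(1) _ assms(2)]
  by (intro measurable_compose[OF measurable_vimage_algebra1 assms(3)]) auto

lemma prob_space_kernel_restrict:
  assumes "sets P = sets (PiM I M)" "Z \<subseteq> I" "k \<in> PiM Z M \<rightarrow>\<^sub>M prob_algebra N" "x \<in> space P"
  shows "prob_space (k (restrict x Z))"
  using measurable_space[OF assms(3) restrict_in_space_PiM_of_sets_eq[OF assms(1,4,2)]] by (simp add: space_prob_algebra)

lemma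
  assumes "sets P = sets (PiM I M)" "Z \<subseteq> I" "k \<in> PiM Z M \<rightarrow>\<^sub>M prob_algebra N" "B \<in> sets N"
  shows measurable_measure_kernel_restrict:
      "(\<lambda>x. measure (k (restrict x Z)) B) \<in> borel_measurable (coord_algebra P M Z)"
    and emeasure_kernel_restrict:
      "x \<in> space P \<Longrightarrow> emeasure (k (restrict x Z)) B = ennreal (measure (k (restrict x Z)) B)"
    and measure_kernel_restrict_le_1: "x \<in> space P \<Longrightarrow> measure (k (restrict x Z)) B \<le> 1"
proof -
  show "(\<lambda>x. measure (k (restrict x Z)) B) \<in> borel_measurable (coord_algebra P M Z)"
    using measurable_measure_prob_algebra[OF assms(4)]
    by (intro measurable_coord_algebra[OF assms(1,2) measurable_compose[OF assms(3)]])
  assume "x \<in> space P"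
  note kx = prob_space_kernel_restrict[OF assms(1-3) this]
  show "emeasure (k (restrict x Z)) B = ennreal (measure (k (restrict x Z)) B)"
    using finite_measure.emeasure_eq_measure[OF prob_space.finite_measure[OF kx]] .
  show "measure (k (restrict x Z)) B \<le> 1" by (rule prob_space.prob_le_1[OF kx])
qed

lemma nn_integral_eq_integral_unit_bounded:
  assumes "prob_space P" "f \<in> borel_measurable P" "\<And>x. x \<in> space P \<Longrightarrow> 0 \<le> f x \<and> f x \<le> 1"
  shows "(\<integral>\<^sup>+x. ennreal (f x) \<partial>P) = ennreal (\<integral>x. f x \<partial>P)"
proof -
  interpret prob_space P by fact
  have "integrable P f"
    by (rule integrable_const_bound[where B=1]) (use assms in auto)
  then show ?thesis using assms by (intro nn_integral_eq_integral) auto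
qed

lemma measure_inter_eq_integral_of_cond_indep:
  assumes P: "prob_space P" and F: "subalgebra P F" and S: "S \<in> sets P" and T: "T \<in> sets P"
    and g: "g \<in> borel_measurable F" "\<And>x. x \<in> space P \<Longrightarrow> 0 \<le> g x \<and> g x \<le> 1"
    and factor: "AE x in P. real_cond_exp P F (indicator (S \<inter> T)) x
      = real_cond_exp P F (indicator S) x * real_cond_exp P F (indicator T) x"
    and S_cond: "AE x in P. real_cond_exp P F (indicator S) x = g x"
  shows "measure P (S \<inter> T) = (\<integral>x. g x * indicator T x \<partial>P)"
proof -
  interpret prob_space P by fact
  interpret F: finite_measure_subalgebra P F
    using F by (simp add: finite_measure_subalgebra_def finite_measure_subalgebra_axioms_def finite_measure)
  have [measurable]: "real_cond_exp P F f \<in> borel_measurable P" for f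
    by (rule measurable_from_subalg[OF F borel_measurable_cond_exp])
  have [measurable]: "g \<in> borel_measurable P" "S \<in> sets P" "T \<in> sets P"
    using measurable_from_subalg[OF F g(1)] S T by simp_all
  have "measure P (S \<inter> T) = (\<integral>x. real_cond_exp P F (indicator (S \<inter> T)) x \<partial>P)"
    using F.real_cond_exp_int(2)[of "indicator (S \<inter> T)"] by (simp add: integrable_const_bound[where B=1])
  also have "\<dots> = (\<integral>x. g x * real_cond_exp P F (indicator T) x \<partial>P)"
    using factor S_cond by (intro integral_cong_AE) auto
  also have "\<dots> = (\<integral>x. g x * indicator T x \<partial>P)"
    using g by (intro F.real_cond_exp_intg(2)) (auto intro!: integrable_const_bound[where B=1] simp: indicator_def)
  finally show ?thesis .
qed

lemma real_cond_exp_indicator_inter_factorizes: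
  assumes P: "prob_space P" and G: "subalgebra P G" and GF: "subalgebra G F"
    and S: "S \<in> sets P" and T: "T \<in> sets G"
    and g: "g \<in> borel_measurable F" "\<And>x. x \<in> space P \<Longrightarrow> 0 \<le> g x \<and> g x \<le> 1"
    and S_cond: "AE x in P. real_cond_exp P G (indicator S) x = g x"
  shows "AE x in P. real_cond_exp P F (indicator (S \<inter> T)) x
    = real_cond_exp P F (indicator S) x * real_cond_exp P F (indicator T) x"
proof -
  interpret prob_space P by fact
  have F: "subalgebra P F" using G GF by (auto simp: subalgebra_def)
  interpret F: finite_measure_subalgebra P F
    using F by (simp add: finite_measure_subalgebra_def finite_measure_subalgebra_axioms_def finite_measure)
  interpret G: finite_measure_subalgebra P G
    using G by (simp add: finite_measure_subalgebra_def finite_measure_subalgebra_axioms_def finite_measure)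
  have [measurable]: "real_cond_exp P G f \<in> borel_measurable P" for f
    by (rule measurable_from_subalg[OF G borel_measurable_cond_exp])
  have gG: "g \<in> borel_measurable G" by (rule measurable_from_subalg[OF GF g(1)])
  have [measurable]: "g \<in> borel_measurable P" "S \<in> sets P" "T \<in> sets P"
    using measurable_from_subalg[OF F g(1)] S T G by (auto simp: subalgebra_def)
  have integrable: "integrable P g" "integrable P (indicator S :: _ \<Rightarrow> real)"
    "integrable P (indicator (S \<inter> T) :: _ \<Rightarrow> real)" "integrable P (\<lambda>x. g x * indicator T x)"
    using g by (auto intro!: integrable_const_bound[where B=1] simp: indicator_def)
  have "indicator (S \<inter> T) = (\<lambda>x. indicator T x * indicator S x :: real)"
    by (auto simp: indicator_def)
  moreover have "AE x in P. real_cond_exp P G (\<lambda>x. indicator T x * indicator S x) x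
      = indicator T x * real_cond_exp P G (indicator S) x"
    using T integrable(3) by (intro G.real_cond_exp_mult) (auto simp: indicator_inter_arith[symmetric] Int_commute)
  ultimately have "AE x in P. real_cond_exp P G (indicator (S \<inter> T)) x = indicator T x * real_cond_exp P G (indicator S) x"
    by simp
  with S_cond have inner: "AE x in P. real_cond_exp P G (indicator (S \<inter> T)) x = g x * indicator T x"
    by eventually_elim (simp add: mult.commute)
  have "AE x in P. real_cond_exp P F (indicator (S \<inter> T)) x
      = real_cond_exp P F (real_cond_exp P G (indicator (S \<inter> T))) x"
    using F.real_cond_exp_nested_subalg[OF G GF integrable(3)] by (simp add: eq_commute)
  moreover have "AE x in P. real_cond_exp P F (real_cond_exp P G (indicator (S \<inter> T))) x
      = real_cond_exp P F (\<lambda>x. g x * indicator T x) x"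
    using inner by (intro F.real_cond_exp_cong) auto
  moreover have "AE x in P. real_cond_exp P F (\<lambda>x. g x * indicator T x) x = g x * real_cond_exp P F (indicator T) x"
    using g(1) integrable(4) by (intro F.real_cond_exp_mult) auto
  moreover have "AE x in P. real_cond_exp P F (indicator S) x = real_cond_exp P F (real_cond_exp P G (indicator S)) x"
    using F.real_cond_exp_nested_subalg[OF G GF integrable(2)] by (simp add: eq_commute)
  moreover have "AE x in P. real_cond_exp P F (real_cond_exp P G (indicator S)) x = real_cond_exp P F g x"
    using S_cond by (intro F.real_cond_exp_cong) auto
  moreover have "AE x in P. real_cond_exp P F g x = g x"
    by (rule F.real_cond_exp_F_meas[OF integrable(1) g(1)])
  ultimately show ?thesis by eventually_elim simp
qed

lemma real_cond_exp_indicator_eq_kernel: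
  assumes P: "prob_space P" and sP: "sets P = sets (PiM I M)" and w: "w \<in> I" and Y: "Y \<subseteq> I"
    and rcd: "is_rcd P M w Y k" and B: "B \<in> sets (M w)"
  shows "AE x in P. real_cond_exp P (coord_algebra P M Y) (indicator {x \<in> space P. x w \<in> B}) x
    = measure (k (restrict x Y)) B"
proof -
  interpret prob_space P by fact
  define F where "F = coord_algebra P M Y"
  have subF: "subalgebra P F" unfolding F_def by (rule subalgebra_coord_algebra[OF sP Y])
  interpret F: finite_measure_subalgebra P F
    using subF by (simp add: finite_measure_subalgebra_def finite_measure_subalgebra_axioms_def finite_measure)
  have k: "k \<in> PiM Y M \<rightarrow>\<^sub>M prob_algebra (M w)" using rcd by (simp add: is_rcd_def)
  define g where "g x = measure (k (restrict x Y)) B" for x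
  have gF: "g \<in> borel_measurable F"
    unfolding g_def F_def by (rule measurable_measure_kernel_restrict[OF sP Y k B])
  have g01: "0 \<le> g x \<and> g x \<le> 1" if "x \<in> space P" for x
    unfolding g_def using measure_kernel_restrict_le_1[OF sP Y k B that] by simp
  define S where "S = {x \<in> space P. x w \<in> B}"
  have [measurable]: "g \<in> borel_measurable P" "S \<in> sets P"
    using measurable_from_subalg[OF subF gF] sets_component_preimage[OF sP w B] by (simp_all add: S_def)
  show ?thesis
    unfolding F_def[symmetric] S_def[symmetric] g_def[symmetric]
  proof (rule F.real_cond_exp_charact)
    fix A assume "A \<in> sets F"
    then obtain D where D: "D \<in> sets (PiM Y M)" and A: "A = (\<lambda>x. restrict x Y) -` D \<inter> space P"
      by (auto simp: F_def sets_coord_algebra[OF sP Y])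
    have A_sets: "A \<in> sets P" using \<open>A \<in> sets F\<close> subF by (auto simp: subalgebra_def)
    have "A \<inter> S = {x \<in> space P. x w \<in> B \<and> restrict x Y \<in> D}" by (auto simp: A S_def)
    then have "emeasure P (A \<inter> S) = (\<integral>\<^sup>+ x. indicator D (restrict x Y) * emeasure (k (restrict x Y)) B \<partial>P)"
      using rcd B D unfolding is_rcd_def by simp
    also have "\<dots> = (\<integral>\<^sup>+ x. ennreal (indicator A x * g x) \<partial>P)"
      by (intro nn_integral_cong) (auto simp: A g_def indicator_def emeasure_kernel_restrict[OF sP Y k B])
    also have "\<dots> = ennreal (\<integral>x. indicator A x * g x \<partial>P)"
      by (rule nn_integral_eq_integral_unit_bounded[OF P]) (use g01 A_sets in \<open>auto simp: indicator_def\<close>)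
    finally have "measure P (A \<inter> S) = (\<integral>x. indicator A x * g x \<partial>P)"
      by (simp add: emeasure_eq_measure integral_nonneg_AE g01 indicator_def)
    then show "(\<integral>x\<in>A. indicator S x \<partial>P) = (\<integral>x\<in>A. g x \<partial>P)"
      using A_sets by (simp add: set_lebesgue_integral_def indicator_inter_arith[symmetric])
  next
    show "integrable P (indicator S :: _ \<Rightarrow> real)" "integrable P g"
      using g01 by (auto intro!: integrable_const_bound[where B=1])
  qed (rule gF)
qed

lemma
  assumes sP: "sets P = sets (PiM I M)" and w: "w \<in> I"
  shows coord_singleton_sets_component:
      "S \<in> sets (PiM {w} M) \<Longrightarrow> \<exists>B \<in> sets (M w). {x \<in> space P. restrict x {w} \<in> S} = {x \<in> space P. x w \<in> B}"
    and component_sets_coord_singleton: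
      "B \<in> sets (M w) \<Longrightarrow> \<exists>S \<in> sets (PiM {w} M). {x \<in> space P. x w \<in> B} = {x \<in> space P. restrict x {w} \<in> S}"
proof -
  have xw: "x w \<in> space (M w)" and restr: "restrict x {w} = (\<lambda>u\<in>{w}. x w)" if "x \<in> space P" for x
    using restrict_in_space_PiM_of_sets_eq[OF sP that, of "{w}"] w
    by (auto simp: space_PiM restrict_def fun_eq_iff)
  show "\<exists>B \<in> sets (M w). {x \<in> space P. restrict x {w} \<in> S} = {x \<in> space P. x w \<in> B}"
    if S: "S \<in> sets (PiM {w} M)"
  proof (intro bexI)
    have "(\<lambda>y. \<lambda>u\<in>{w}. y) \<in> M w \<rightarrow>\<^sub>M PiM {w} M" by (rule measurable_restrict) auto
    from measurable_sets[OF this S]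
    show "(\<lambda>y. \<lambda>u\<in>{w}. y) -` S \<inter> space (M w) \<in> sets (M w)" .
  qed (use xw restr in auto)
  show "\<exists>S \<in> sets (PiM {w} M). {x \<in> space P. x w \<in> B} = {x \<in> space P. restrict x {w} \<in> S}"
    if B: "B \<in> sets (M w)"
  proof (intro bexI)
    show "(\<lambda>z. z w) -` B \<inter> space (PiM {w} M) \<in> sets (PiM {w} M)"
      using measurable_sets[OF measurable_component_singleton[of w "{w}" M] B] by simp
  qed (use restrict_in_space_PiM_of_sets_eq[OF sP _, of _ "{w}"] w in auto)
qed

lemma cond_indep_singleton_iff:
  assumes sP: "sets P = sets (PiM I M)" and w: "w \<in> I"
  shows "cond_indep P M {w} Y Z \<longleftrightarrow> (\<forall>B \<in> sets (M w). \<forall>T \<in> sets (PiM Y M).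
    AE x in P. real_cond_exp P (coord_algebra P M Z)
        (indicator ({x \<in> space P. x w \<in> B} \<inter> {x \<in> space P. restrict x Y \<in> T})) x
      = real_cond_exp P (coord_algebra P M Z) (indicator {x \<in> space P. x w \<in> B}) x
        * real_cond_exp P (coord_algebra P M Z) (indicator {x \<in> space P. restrict x Y \<in> T}) x)"
    (is "_ \<longleftrightarrow> (\<forall>B \<in> _. \<forall>T \<in> _. ?ci {x \<in> space P. x w \<in> B} T)")
proof (unfold cond_indep_def Let_def, intro iffI ballI)
  fix B T assume ci: "\<forall>S\<in>sets (PiM {w} M). \<forall>T\<in>sets (PiM Y M). ?ci {x \<in> space P. restrict x {w} \<in> S} T"
    and B: "B \<in> sets (M w)" and T: "T \<in> sets (PiM Y M)"
  obtain S where "S \<in> sets (PiM {w} M)" "{x \<in> space P. x w \<in> B} = {x \<in> space P. restrict x {w} \<in> S}"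
    using component_sets_coord_singleton[OF sP w B] by blast
  then show "?ci {x \<in> space P. x w \<in> B} T" using ci T by simp
next
  fix S T assume ci: "\<forall>B \<in> sets (M w). \<forall>T \<in> sets (PiM Y M). ?ci {x \<in> space P. x w \<in> B} T"
    and S: "S \<in> sets (PiM {w} M)" and T: "T \<in> sets (PiM Y M)"
  obtain B where "B \<in> sets (M w)" "{x \<in> space P. restrict x {w} \<in> S} = {x \<in> space P. x w \<in> B}"
    using coord_singleton_sets_component[OF sP w S] by blast
  then show "?ci {x \<in> space P. restrict x {w} \<in> S} T" using ci T by simp
qed

lemma is_rcd_restrict_of_cond_indep:
  assumes P: "prob_space P" and sP: "sets P = sets (PiM I M)" and w: "w \<in> I"
    and ZY: "Z \<subseteq> Y" and Y: "Y \<subseteq> I"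
    and ci: "cond_indep P M {w} Y Z" and rcd: "is_rcd P M w Z k"
  shows "is_rcd P M w Y (\<lambda>y. k (restrict y Z))"
  unfolding is_rcd_def
proof (intro conjI ballI)
  interpret prob_space P by fact
  have Z: "Z \<subseteq> I" using ZY Y by simp
  have k: "k \<in> PiM Z M \<rightarrow>\<^sub>M prob_algebra (M w)" using rcd by (simp add: is_rcd_def)
  then show "(\<lambda>y. k (restrict y Z)) \<in> PiM Y M \<rightarrow>\<^sub>M prob_algebra (M w)"
    by (rule measurable_compose[OF measurable_restrict_subset[OF ZY]])
  fix B T assume B: "B \<in> sets (M w)" and T: "T \<in> sets (PiM Y M)"
  define g where "g x = measure (k (restrict x Z)) B" for x
  define S where "S = {x \<in> space P. x w \<in> B}"
  define TY where "TY = {x \<in> space P. restrict x Y \<in> T}"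
  have F: "subalgebra P (coord_algebra P M Z)" by (rule subalgebra_coord_algebra[OF sP Z])
  have g: "g \<in> borel_measurable (coord_algebra P M Z)" "\<And>x. x \<in> space P \<Longrightarrow> 0 \<le> g x \<and> g x \<le> 1"
    unfolding g_def using measurable_measure_kernel_restrict[OF sP Z k B] measure_kernel_restrict_le_1[OF sP Z k B]
    by auto
  have S: "S \<in> sets P" unfolding S_def by (rule sets_component_preimage[OF sP w B])
  have TY: "TY \<in> sets P"
    using F coord_algebra_preimage_in_sets[OF sP Y T] subalgebra_coord_algebra[OF sP Y]
    by (auto simp: TY_def subalgebra_def)
  have "measure P (S \<inter> TY) = (\<integral>x. g x * indicator TY x \<partial>P)"
  proof (rule measure_inter_eq_integral_of_cond_indep[OF P F S TY g])
    show "AE x in P. real_cond_exp P (coord_algebra P M Z) (indicator (S \<inter> TY)) x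
        = real_cond_exp P (coord_algebra P M Z) (indicator S) x * real_cond_exp P (coord_algebra P M Z) (indicator TY) x"
      using ci B T unfolding cond_indep_singleton_iff[OF sP w] S_def TY_def by blast
    show "AE x in P. real_cond_exp P (coord_algebra P M Z) (indicator S) x = g x"
      unfolding S_def g_def by (rule real_cond_exp_indicator_eq_kernel[OF P sP w Z rcd B])
  qed
  then have "emeasure P (S \<inter> TY) = (\<integral>\<^sup>+x. ennreal (g x * indicator TY x) \<partial>P)"
    using g measurable_from_subalg[OF F g(1)] TY
    by (simp add: emeasure_eq_measure nn_integral_eq_integral_unit_bounded[OF P] indicator_def)
  also have "\<dots> = (\<integral>\<^sup>+x. indicator T (restrict x Y) * emeasure (k (restrict (restrict x Y) Z)) B \<partial>P)"
    using ZY by (intro nn_integral_cong)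
      (auto simp: TY_def g_def indicator_def Int_absorb1 emeasure_kernel_restrict[OF sP Z k B])
  also have "S \<inter> TY = {x \<in> space P. x w \<in> B \<and> restrict x Y \<in> T}" by (auto simp: S_def TY_def)
  finally show "emeasure P {x \<in> space P. x w \<in> B \<and> restrict x Y \<in> T}
      = (\<integral>\<^sup>+x. indicator T (restrict x Y) * emeasure (k (restrict (restrict x Y) Z)) B \<partial>P)" .
qed

lemma cond_indep_of_is_rcd_restrict:
  assumes P: "prob_space P" and sP: "sets P = sets (PiM I M)" and w: "w \<in> I"
    and ZY: "Z \<subseteq> Y" and Y: "Y \<subseteq> I"
    and k: "k \<in> PiM Z M \<rightarrow>\<^sub>M prob_algebra (M w)" and rcd: "is_rcd P M w Y (\<lambda>y. k (restrict y Z))"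
  shows "cond_indep P M {w} Y Z"
  unfolding cond_indep_singleton_iff[OF sP w]
proof (intro ballI)
  have Z: "Z \<subseteq> I" using ZY Y by simp
  fix B T assume B: "B \<in> sets (M w)" and T: "T \<in> sets (PiM Y M)"
  show "AE x in P. real_cond_exp P (coord_algebra P M Z)
        (indicator ({x \<in> space P. x w \<in> B} \<inter> {x \<in> space P. restrict x Y \<in> T})) x
      = real_cond_exp P (coord_algebra P M Z) (indicator {x \<in> space P. x w \<in> B}) x
        * real_cond_exp P (coord_algebra P M Z) (indicator {x \<in> space P. restrict x Y \<in> T}) x"
  proof (rule real_cond_exp_indicator_inter_factorizes[OF P subalgebra_coord_algebra[OF sP Y]
        subalgebra_coord_algebra_mono[OF sP ZY Y] sets_component_preimage[OF sP w B]
        coord_algebra_preimage_in_sets[OF sP Y T]])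
    show "(\<lambda>x. measure (k (restrict x Z)) B) \<in> borel_measurable (coord_algebra P M Z)"
      "\<And>x. x \<in> space P \<Longrightarrow> 0 \<le> measure (k (restrict x Z)) B \<and> measure (k (restrict x Z)) B \<le> 1"
      using measurable_measure_kernel_restrict[OF sP Z k B] measure_kernel_restrict_le_1[OF sP Z k B] by auto
    show "AE x in P. real_cond_exp P (coord_algebra P M Y) (indicator {x \<in> space P. x w \<in> B}) x
        = measure (k (restrict x Z)) B"
      using real_cond_exp_indicator_eq_kernel[OF P sP w Y rcd B] ZY by (simp add: Int_absorb1)
  qed
qed

lemma cond_indep_iff_is_rcd_restrict:
  assumes "prob_space P" "sets P = sets (PiM I M)" "w \<in> I" "Z \<subseteq> Y" "Y \<subseteq> I"
    and rcd: "is_rcd P M w Z k"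
  shows "cond_indep P M {w} Y Z \<longleftrightarrow> is_rcd P M w Y (\<lambda>y. k (restrict y Z))"
proof
  assume "cond_indep P M {w} Y Z"
  then show "is_rcd P M w Y (\<lambda>y. k (restrict y Z))"
    by (rule is_rcd_restrict_of_cond_indep[OF assms(1-5) _ rcd])
next
  assume "is_rcd P M w Y (\<lambda>y. k (restrict y Z))"
  moreover have "k \<in> PiM Z M \<rightarrow>\<^sub>M prob_algebra (M w)" using rcd unfolding is_rcd_def by (rule conjunct1)
  ultimately show "cond_indep P M {w} Y Z"
    by (intro cond_indep_of_is_rcd_restrict[OF assms(1-5)])
qed

section \<open>Listing a finite set along a strict linear order\<close>

lemma strict_linear_order_on_finite_max:
  assumes slo: "strict_linear_order_on V r" and "finite A" "A \<noteq> {}" "A \<subseteq> V"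
  shows "\<exists>m\<in>A. \<forall>a\<in>A. a \<noteq> m \<longrightarrow> (a, m) \<in> r"
  using assms(2-4)
proof (induction A rule: finite_ne_induct)
  case (insert x F)
  then obtain m where m: "m \<in> F" "\<forall>a\<in>F. a \<noteq> m \<longrightarrow> (a, m) \<in> r" by auto
  have "trans r" "(x, m) \<in> r \<or> (m, x) \<in> r" "x \<noteq> m"
    using slo insert m(1) unfolding strict_linear_order_on_def total_on_def by auto
  then show ?case using m by (auto dest: transD)
qed auto

lemma strict_linear_order_on_sorted_list:
  assumes "strict_linear_order_on V r" "finite A" "A \<subseteq> V"
  shows "\<exists>xs. set xs = A \<and> distinct xs \<and> sorted_wrt (\<lambda>a b. (a, b) \<in> r) xs"
  using assms(2,3)
proof (induction "card A" arbitrary: A)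
  case (Suc n)
  then have "A \<noteq> {}" by auto
  then obtain m where m: "m \<in> A" "\<forall>a\<in>A. a \<noteq> m \<longrightarrow> (a, m) \<in> r"
    using strict_linear_order_on_finite_max[OF assms(1)] Suc.prems by blast
  moreover have "n = card (A - {m})" using Suc.hyps(2) m(1) Suc.prems(1) by simp
  ultimately obtain xs where "set xs = A - {m}" "distinct xs" "sorted_wrt (\<lambda>a b. (a, b) \<in> r) xs"
    using Suc by blast
  then show ?case using m by (intro exI[of _ "xs @ [m]"]) (auto simp: sorted_wrt_append)
qed auto

lemma
  assumes "strict_linear_order_on V r" "finite A" "A \<subseteq> V"
  shows set_sorted_nodes: "set (sorted_nodes r A) = A"
    and distinct_sorted_nodes: "distinct (sorted_nodes r A)"
    and sorted_wrt_sorted_nodes: "sorted_wrt (\<lambda>a b. (a, b) \<in> r) (sorted_nodes r A)"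
  using someI_ex[OF strict_linear_order_on_sorted_list[OF assms]] unfolding sorted_nodes_def by auto

lemma set_take_sorted_wrt:
  assumes "strict_linear_order_on V r" "sorted_wrt (\<lambda>a b. (a, b) \<in> r) xs" "i < length xs"
  shows "set (take i xs) = {u \<in> set xs. (u, xs ! i) \<in> r}"
proof -
  have "trans r" "irrefl r" using assms(1) by (auto simp: strict_linear_order_on_def)
  have "(xs ! j, xs ! i) \<in> r \<longleftrightarrow> j < i" if "j < length xs" for j
  proof
    assume ji: "(xs ! j, xs ! i) \<in> r"
    show "j < i"
    proof (rule ccontr)
      assume "\<not> j < i"
      then have "j = i \<or> i < j" by auto
      then have "j = i \<or> (xs ! i, xs ! j) \<in> r" using assms(2) that by (auto simp: sorted_wrt_iff_nth_less)
      then show False using ji \<open>trans r\<close> \<open>irrefl r\<close> by (auto simp: irrefl_def dest: transD)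
    qed
  qed (use assms(2,3) in \<open>auto simp: sorted_wrt_iff_nth_less\<close>)
  moreover have "set (take i xs) = (!) xs ` {..<i}"
    using assms(3) nth_image[of i xs] by (simp add: atLeast0LessThan)
  ultimately show ?thesis using assms(3) by (auto simp: set_conv_nth)
qed

lemma predecessors_eq_diff_successors:
  assumes "strict_linear_order_on (nodes G) r" "A \<subseteq> nodes G" "w \<in> nodes G"
  shows "A - {x \<in> nodes G. (w, x) \<in> r} - {w} = {x \<in> A. (x, w) \<in> r}"
  using assms unfolding strict_linear_order_on_def total_on_def irrefl_def
  by (auto dest: transD)

section \<open>Ancestral sets and marginalization\<close>

lemma dpath_Cons_Cons: "dpath G (a # b # xs) \<longleftrightarrow> (a, b) \<in> edges G \<and> dpath G (b # xs)"
  by (simp add: dpath_def)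

lemma dpath_snoc: "dpath G (xs @ [z]) \<Longrightarrow> (z, y) \<in> edges G \<Longrightarrow> dpath G (xs @ [z, y])"
  unfolding dpath_def by (auto simp: successively_append_iff)

lemma dpath_rtrancl_last: "dpath G xs \<Longrightarrow> u \<in> set xs \<Longrightarrow> (u, last xs) \<in> (edges G)\<^sup>*"
proof (induction xs arbitrary: u rule: induct_list012)
  case (3 a b xs)
  have ab: "(a, b) \<in> edges G" and path: "dpath G (b # xs)" using "3.prems"(1) by (simp_all add: dpath_Cons_Cons)
  have "(v, last (b # xs)) \<in> (edges G)\<^sup>*" if "v \<in> set (b # xs)" for v
    by (rule "3.IH"(2)[OF path that])
  then show ?case using ab "3.prems"(2) by (auto intro: converse_rtrancl_into_rtrancl)
qed auto

lemma dpath_induced: "set xs \<subseteq> A \<Longrightarrow> dpath (induced G A) xs \<longleftrightarrow> dpath G xs"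
  by (induction xs rule: induct_list012) (auto simp: dpath_def induced_def)

lemma ancestral_dpath_subset:
  assumes "ancestral G A" "dpath G xs" "xs \<noteq> []" "last xs \<in> A"
  shows "set xs \<subseteq> A"
  using assms dpath_rtrancl_last[OF assms(2)] unfolding ancestral_def by blast

lemma edges_marg_induced:
  assumes anc: "ancestral G A"
  shows "edges (marg (induced G A) (A \<inter> U)) = edges (induced (marg G U) (A - U))"
proof (intro set_eqI iffI)
  fix e assume "e \<in> edges (marg (induced G A) (A \<inter> U))"
  then obtain v1 v2 us where e: "e = (v1, v2)" "v1 \<in> A - U" "v2 \<in> A - U" "set us \<subseteq> A \<inter> U"
      "dpath (induced G A) (v1 # us @ [v2])"
    by (auto simp: marg_def induced_def)
  then have "dpath G (v1 # us @ [v2])" by (subst (asm) dpath_induced) auto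
  then show "e \<in> edges (induced (marg G U) (A - U))"
    using e anc by (auto simp: marg_def induced_def ancestral_def)
next
  fix e assume "e \<in> edges (induced (marg G U) (A - U))"
  then obtain v1 v2 us where e: "e = (v1, v2)" "v1 \<in> A - U" "v2 \<in> A - U" "set us \<subseteq> U"
      "dpath G (v1 # us @ [v2])"
    by (auto simp: marg_def induced_def)
  have sub: "set (v1 # us @ [v2]) \<subseteq> A" by (rule ancestral_dpath_subset[OF anc e(5)]) (use e in auto)
  then have "dpath (induced G A) (v1 # us @ [v2])" using e(5) by (subst dpath_induced) auto
  then show "e \<in> edges (marg (induced G A) (A \<inter> U))"
    using e sub by (auto simp: marg_def induced_def)
qed

lemma hyper_marg_induced_subset:
  assumes anc: "ancestral G A"
  shows "hyper (marg (induced G A) (A \<inter> U)) \<subseteq> hyper (induced (marg G U) (A - U))"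
proof
  fix F' assume "F' \<in> hyper (marg (induced G A) (A \<inter> U))"
  then obtain F where F': "F' \<subseteq> A - U" and F: "F \<in> hyper G" "F \<subseteq> A" "F \<subseteq> F' \<union> (A \<inter> U)"
    and reach: "\<forall>v\<in>F'. v \<in> F - (A \<inter> U) \<or>
      (\<exists>us. us \<noteq> [] \<and> set us \<subseteq> A \<inter> U \<and> hd us \<in> F \<and> dpath (induced G A) (us @ [v]))"
    by (auto simp: marg_def induced_def)
  have "\<forall>v\<in>F'. v \<in> F - U \<or> (\<exists>us. us \<noteq> [] \<and> set us \<subseteq> U \<and> hd us \<in> F \<and> dpath G (us @ [v]))"
  proof
    fix v assume v: "v \<in> F'"
    then have vA: "v \<in> A" using F' by auto
    show "v \<in> F - U \<or> (\<exists>us. us \<noteq> [] \<and> set us \<subseteq> U \<and> hd us \<in> F \<and> dpath G (us @ [v]))"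
    proof (cases "v \<in> F - (A \<inter> U)")
      case False
      then obtain us where us: "us \<noteq> []" "set us \<subseteq> A \<inter> U" "hd us \<in> F" "dpath (induced G A) (us @ [v])"
        using reach v by blast
      have "dpath G (us @ [v])" using us(2,4) vA by (subst (asm) dpath_induced) auto
      then show ?thesis using us by blast
    qed (use vA in blast)
  qed
  moreover have "F \<subseteq> F' \<union> U" "F' \<subseteq> nodes G - U" using F F' anc by (auto simp: ancestral_def)
  ultimately show "F' \<in> hyper (induced (marg G U) (A - U))"
    using F(1) F' unfolding marg_def induced_def hedg.simps mem_Collect_eq by blast
qed

lemma hyper_induced_marg_subset:
  assumes anc: "ancestral G A" and hedg: "is_hedg G"
  shows "hyper (induced (marg G U) (A - U)) \<subseteq> hyper (marg (induced G A) (A \<inter> U))"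
proof
  fix F' assume "F' \<in> hyper (induced (marg G U) (A - U))"
  then obtain F where F': "F' \<subseteq> A - U" and F: "F \<in> hyper G" "F \<subseteq> F' \<union> U"
    and reach: "\<forall>v\<in>F'. v \<in> F - U \<or> (\<exists>us. us \<noteq> [] \<and> set us \<subseteq> U \<and> hd us \<in> F \<and> dpath G (us @ [v]))"
    by (auto simp: marg_def induced_def)
  have FA: "F \<inter> A \<in> hyper G" using hedg F(1) unfolding is_hedg_def by blast
  have "\<forall>v\<in>F'. v \<in> (F \<inter> A) - (A \<inter> U) \<or>
      (\<exists>us. us \<noteq> [] \<and> set us \<subseteq> A \<inter> U \<and> hd us \<in> F \<inter> A \<and> dpath (induced G A) (us @ [v]))"
  proof
    fix v assume v: "v \<in> F'"
    show "v \<in> (F \<inter> A) - (A \<inter> U) \<or>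
      (\<exists>us. us \<noteq> [] \<and> set us \<subseteq> A \<inter> U \<and> hd us \<in> F \<inter> A \<and> dpath (induced G A) (us @ [v]))"
    proof (cases "v \<in> F - U")
      case False
      then obtain us where us: "us \<noteq> []" "set us \<subseteq> U" "hd us \<in> F" "dpath G (us @ [v])"
        using reach v by blast
      have sub: "set (us @ [v]) \<subseteq> A" by (rule ancestral_dpath_subset[OF anc us(4)]) (use v F' in auto)
      then have "dpath (induced G A) (us @ [v])" using us(4) by (subst dpath_induced)
      moreover have "hd us \<in> A" using sub us(1) by (cases us) auto
      ultimately have "us \<noteq> [] \<and> set us \<subseteq> A \<inter> U \<and> hd us \<in> F \<inter> A \<and> dpath (induced G A) (us @ [v])"
        using us sub by auto
      then show ?thesis by blast
    qed (use F' v in auto)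
  qed
  moreover have "F \<inter> A \<subseteq> F' \<union> (A \<inter> U)" "F' \<subseteq> A - A \<inter> U" using F F' by auto
  moreover have "F \<inter> A \<in> {F \<in> hyper G. F \<subseteq> A}" using FA by simp
  ultimately show "F' \<in> hyper (marg (induced G A) (A \<inter> U))"
    unfolding marg_def induced_def hedg.simps mem_Collect_eq by blast
qed

lemma marg_induced_ancestral:
  assumes "ancestral G A" "is_hedg G"
  shows "marg (induced G A) (A \<inter> U) = induced (marg G U) (A - U)"
proof (rule hedg.equality)
  show "hyper (marg (induced G A) (A \<inter> U)) = hyper (induced (marg G U) (A - U))"
    by (rule equalityI[OF hyper_marg_induced_subset[OF assms(1)] hyper_induced_marg_subset[OF assms]])
qed (simp_all add: edges_marg_induced[OF assms(1)], auto simp: marg_def induced_def)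

lemma ancestral_marg:
  assumes anc: "ancestral G A"
  shows "ancestral (marg G U) (A - U)"
  unfolding ancestral_def
proof (intro conjI allI impI)
  show "A - U \<subseteq> nodes (marg G U)" using anc by (auto simp: ancestral_def marg_def)
  fix w a assume "(w, a) \<in> (edges (marg G U))\<^sup>*" and "a \<in> A - U"
  then show "w \<in> A - U"
  proof (induction rule: converse_rtrancl_induct)
    case (step x y)
    then obtain us where xy: "x \<in> nodes G - U" "set us \<subseteq> U" "dpath G (x # us @ [y])"
      by (auto simp: marg_def)
    have "set (x # us @ [y]) \<subseteq> A" by (rule ancestral_dpath_subset[OF anc xy(3)]) (use step in auto)
    then show ?case using xy by auto
  qed
qed

definition ancestors :: "'v hedg \<Rightarrow> 'v set \<Rightarrow> 'v set" where
  "ancestors G A = {x. \<exists>a\<in>A. (x, a) \<in> (edges G)\<^sup>*}"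

lemma subset_ancestors: "A \<subseteq> ancestors G A"
  by (auto simp: ancestors_def)

lemma ancestral_ancestors:
  assumes "is_hedg G" "A \<subseteq> nodes G"
  shows "ancestral G (ancestors G A)"
  unfolding ancestral_def
proof (intro conjI allI impI subsetI)
  fix x assume "x \<in> ancestors G A"
  then obtain a where a: "a \<in> A" and xa: "(x, a) \<in> (edges G)\<^sup>*" by (auto simp: ancestors_def)
  from xa show "x \<in> nodes G"
  proof (cases rule: converse_rtranclE)
    case base
    then show ?thesis using a assms(2) by auto
  next
    case (step y)
    then show ?thesis using assms(1) by (auto simp: is_hedg_def)
  qed
next
  fix w a assume "a \<in> ancestors G A" "(w, a) \<in> (edges G)\<^sup>*"
  then show "w \<in> ancestors G A" unfolding ancestors_def by (blast intro: rtrancl_trans)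
qed

(* Induction along a G-path into A: a stretch of the path inside U is a single edge of marg G U. *)
lemma ancestral_marg_reach:
  assumes hedg: "is_hedg G" and anc: "ancestral (marg G U) A"
    and reach: "(y, a) \<in> (edges G)\<^sup>*" and a: "a \<in> A"
  shows "(y \<in> nodes G - U \<longrightarrow> y \<in> A) \<and>
    (\<forall>x us. x \<in> nodes G - U \<and> set us \<subseteq> U \<and> dpath G (x # us @ [y]) \<longrightarrow> x \<in> A)"
  using reach
proof (induction rule: converse_rtrancl_induct)
  case base
  have "x \<in> A" if "x \<in> nodes G - U" "set us \<subseteq> U" "dpath G (x # us @ [a])" for x us
  proof -
    have "(x, a) \<in> edges (marg G U)" using that a anc by (auto simp: marg_def ancestral_def)
    then show "x \<in> A" using anc a unfolding ancestral_def by blast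
  qed
  then show ?case using a by blast
next
  case (step z y)
  have z_nodes: "z \<in> nodes G" using step.hyps(1) hedg by (auto simp: is_hedg_def)
  have z_in_A: "z \<in> A" if "z \<notin> U"
  proof -
    have "z \<in> nodes G - U \<and> set [] \<subseteq> U \<and> dpath G (z # [] @ [y])"
      using step.hyps(1) z_nodes that by (simp add: dpath_def)
    then show "z \<in> A" by (rule conjunct2[OF step.IH, rule_format])
  qed
  have "x \<in> A" if x: "x \<in> nodes G - U" "set us \<subseteq> U" "dpath G (x # us @ [z])" for x us
  proof (cases "z \<in> U")
    case True
    have "dpath G (x # (us @ [z]) @ [y])" using dpath_snoc[of G "x # us" z y] x(3) step.hyps(1) by simp
    then have "x \<in> nodes G - U \<and> set (us @ [z]) \<subseteq> U \<and> dpath G (x # (us @ [z]) @ [y])"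
      using x True by simp
    then show "x \<in> A" by (rule conjunct2[OF step.IH, rule_format])
  next
    case False
    then have "(x, z) \<in> edges (marg G U)" using x z_nodes by (auto simp: marg_def)
    then show ?thesis using anc z_in_A[OF False] unfolding ancestral_def by blast
  qed
  then show ?case using z_in_A by blast
qed

lemma ancestors_diff_marg:
  assumes "is_hedg G" "ancestral (marg G U) A"
  shows "ancestors G A - U = A"
proof -
  have "A \<subseteq> nodes G - U" using assms(2) by (auto simp: ancestral_def marg_def)
  moreover have "ancestors G A \<subseteq> nodes G"
    using ancestral_ancestors[OF assms(1)] calculation by (auto simp: ancestral_def)
  ultimately show ?thesis
    using ancestral_marg_reach[OF assms] subset_ancestors[of A G] by (auto simp: ancestors_def)
qed

lemma Pred_le_induced:
  assumes "ancestral G A" "is_hedg G"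
  shows "Pred_le (induced G A) r w = induced (Pred_le G r w) (A - {x \<in> nodes G. (w, x) \<in> r})"
proof -
  have "{x \<in> nodes (induced G A). (w, x) \<in> r} = A \<inter> {x \<in> nodes G. (w, x) \<in> r}"
    using assms(1) by (auto simp: induced_def ancestral_def)
  then show ?thesis unfolding Pred_le_def using marg_induced_ancestral[OF assms] by simp
qed

lemma pred_bd_subset:
  assumes "ancestral G A" "strict_linear_order_on (nodes G) r" "u \<in> A"
  shows "pred_bd (induced G A) r u \<subseteq> {x \<in> A. (x, u) \<in> r}"
proof
  fix x assume "x \<in> pred_bd (induced G A) r u"
  then have x: "x \<in> A" "(u, x) \<notin> r" "x \<noteq> u"
    by (auto simp: pred_bd_def moral_nbrs_def Pred_le_def marg_def induced_def moral_adj_def)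
  moreover have "x \<in> nodes G" "u \<in> nodes G" using assms(1,3) x(1) by (auto simp: ancestral_def)
  ultimately show "x \<in> {x \<in> A. (x, u) \<in> r}"
    using assms(2) unfolding strict_linear_order_on_def total_on_def by blast
qed

lemma all_ancestral_Pred_le_iff_all_ancestral:
  assumes hedg: "is_hedg G" and slo: "strict_linear_order_on (nodes G) r"
  shows "(\<forall>v \<in> nodes G. \<forall>A. ancestral (Pred_le G r v) A \<and> v \<in> A \<longrightarrow>
        Q v (A - {v}) (moral_nbrs (induced (Pred_le G r v) A) v))
    \<longleftrightarrow> (\<forall>A. ancestral G A \<longrightarrow> (\<forall>w \<in> A. Q w {x \<in> A. (x, w) \<in> r} (pred_bd (induced G A) r w)))"
    (is "?local \<longleftrightarrow> ?ancestral")
proof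
  assume local: ?local
  show ?ancestral
  proof (intro allI impI ballI)
    fix A w assume anc: "ancestral G A" and w: "w \<in> A"
    define Aw where "Aw = A - {x \<in> nodes G. (w, x) \<in> r}"
    have A_nodes: "A \<subseteq> nodes G" using anc by (simp add: ancestral_def)
    have "ancestral (Pred_le G r w) Aw" unfolding Aw_def Pred_le_def by (rule ancestral_marg[OF anc])
    moreover have "w \<in> Aw" using w slo by (auto simp: Aw_def strict_linear_order_on_def irrefl_def)
    ultimately have "Q w (Aw - {w}) (moral_nbrs (induced (Pred_le G r w) Aw) w)"
      using local w A_nodes by blast
    moreover have "Aw - {w} = {x \<in> A. (x, w) \<in> r}"
      unfolding Aw_def using predecessors_eq_diff_successors[OF slo A_nodes] w A_nodes by blast
    ultimately show "Q w {x \<in> A. (x, w) \<in> r} (pred_bd (induced G A) r w)"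
      by (simp add: Aw_def pred_bd_def Pred_le_induced[OF anc hedg])
  qed
next
  assume ancestral_sets: ?ancestral
  show ?local
  proof (intro ballI allI impI)
    fix v A assume v: "v \<in> nodes G" and "ancestral (Pred_le G r v) A \<and> v \<in> A"
    then have anc: "ancestral (marg G {x \<in> nodes G. (v, x) \<in> r}) A" and vA: "v \<in> A"
      by (simp_all add: Pred_le_def)
    define Ah where "Ah = ancestors G A"
    have A_nodes: "A \<subseteq> nodes G" using anc by (auto simp: ancestral_def marg_def)
    have anc_Ah: "ancestral G Ah" unfolding Ah_def by (rule ancestral_ancestors[OF hedg A_nodes])
    have Ah_diff: "Ah - {x \<in> nodes G. (v, x) \<in> r} = A"
      unfolding Ah_def by (rule ancestors_diff_marg[OF hedg anc])
    have "v \<in> Ah" using vA subset_ancestors[of A G] by (auto simp: Ah_def)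
    then have "Q v {x \<in> Ah. (x, v) \<in> r} (pred_bd (induced G Ah) r v)"
      using ancestral_sets anc_Ah by blast
    moreover have "{x \<in> Ah. (x, v) \<in> r} = A - {v}"
      using predecessors_eq_diff_successors[OF slo _ v, of Ah] anc_Ah Ah_diff by (simp add: ancestral_def)
    ultimately show "Q v (A - {v}) (moral_nbrs (induced (Pred_le G r v) A) v)"
      by (simp add: pred_bd_def Pred_le_induced[OF anc_Ah hedg] Ah_diff)
  qed
qed

section \<open>The two properties\<close>

lemma is_kernel_chain_restricted_kernel:
  assumes "distinct vs"
    and "\<And>i. i < length vs \<Longrightarrow> Cs (vs ! i) \<subseteq> set (take i vs)"
    and "\<And>u. u \<in> set vs \<Longrightarrow> K u (Cs u) \<in> PiM (Cs u) M \<rightarrow>\<^sub>M prob_algebra (M u)"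
  shows "is_kernel_chain (restricted_kernel K Cs) M {} vs"
proof (rule is_kernel_chainI)
  fix i assume i: "i < length vs"
  show "restricted_kernel K Cs (vs ! i) \<in> PiM ({} \<union> set (take i vs)) M \<rightarrow>\<^sub>M prob_algebra (M (vs ! i))"
    unfolding restricted_kernel_def using assms(2)[OF i] assms(3)[OF nth_mem[OF i]]
    by (intro measurable_compose[OF measurable_restrict_subset]) auto
qed (use assms(1) in simp_all)

context
  fixes G :: "'v hedg" and M :: "'v \<Rightarrow> 'x measure" and P :: "('v \<Rightarrow> 'x) measure"
    and r :: "('v \<times> 'v) set" and K :: "'v \<Rightarrow> 'v set \<Rightarrow> ('v \<Rightarrow> 'x) \<Rightarrow> 'x measure"
  assumes hedg: "is_hedg G" and P: "prob_space P" and sP: "sets P = sets (PiM (nodes G) M)"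
    and slo: "strict_linear_order_on (nodes G) r"
    and rcd: "\<forall>v \<in> nodes G. \<forall>C \<subseteq> nodes G. is_rcd P M v C (K v C)"
begin

lemma sorted_nodes_ancestral:
  assumes "ancestral G A"
  shows "set (sorted_nodes r A) = A" "distinct (sorted_nodes r A)"
    and "i < length (sorted_nodes r A) \<Longrightarrow>
      set (take i (sorted_nodes r A)) = {x \<in> A. (x, sorted_nodes r A ! i) \<in> r}"
proof -
  have A: "finite A" "A \<subseteq> nodes G"
    using assms hedg by (auto simp: ancestral_def is_hedg_def intro: finite_subset)
  show "set (sorted_nodes r A) = A" "distinct (sorted_nodes r A)"
    by (rule set_sorted_nodes[OF slo A] distinct_sorted_nodes[OF slo A])+
  show "set (take i (sorted_nodes r A)) = {x \<in> A. (x, sorted_nodes r A ! i) \<in> r}"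
    if "i < length (sorted_nodes r A)"
    using set_take_sorted_wrt[OF slo sorted_wrt_sorted_nodes[OF slo A] that] set_sorted_nodes[OF slo A] by simp
qed

lemma is_kernel_chain_ancestral:
  assumes anc: "ancestral G A"
  shows "is_kernel_chain (restricted_kernel K (pred_bd (induced G A) r)) M {} (sorted_nodes r A)"
proof (rule is_kernel_chain_restricted_kernel)
  note sorted = sorted_nodes_ancestral[OF anc]
  have A_nodes: "A \<subseteq> nodes G" using anc by (simp add: ancestral_def)
  show "distinct (sorted_nodes r A)" by (rule sorted(2))
  fix i assume i: "i < length (sorted_nodes r A)"
  show "pred_bd (induced G A) r (sorted_nodes r A ! i) \<subseteq> set (take i (sorted_nodes r A))"
    using pred_bd_subset[OF anc slo] nth_mem[OF i] sorted(1) sorted(3)[OF i] by simp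
next
  fix u assume "u \<in> set (sorted_nodes r A)"
  then have u: "u \<in> A" using sorted_nodes_ancestral(1)[OF anc] by simp
  then have "pred_bd (induced G A) r u \<subseteq> nodes G" "u \<in> nodes G"
    using pred_bd_subset[OF anc slo u] anc by (auto simp: ancestral_def)
  then show "K u (pred_bd (induced G A) r u) \<in> PiM (pred_bd (induced G A) r u) M \<rightarrow>\<^sub>M prob_algebra (M u)"
    using rcd by (simp add: is_rcd_def)
qed

lemma ancestral_cond_indep_iff_distr_eq_chain_measure:
  assumes anc: "ancestral G A"
  shows "(\<forall>w \<in> A. cond_indep P M {w} {x \<in> A. (x, w) \<in> r} (pred_bd (induced G A) r w))
    \<longleftrightarrow> distr P (PiM A M) (\<lambda>x. restrict x A)
        = chain_measure (restricted_kernel K (pred_bd (induced G A) r)) M {} (sorted_nodes r A) (\<lambda>_. undefined)"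
proof -
  let ?Cs = "pred_bd (induced G A) r" and ?ws = "sorted_nodes r A"
  note sorted = sorted_nodes_ancestral[OF anc]
  have A_nodes: "A \<subseteq> nodes G" using anc by (simp add: ancestral_def)
  have "cond_indep P M {w} {x \<in> A. (x, w) \<in> r} (?Cs w)
      \<longleftrightarrow> is_rcd P M w {x \<in> A. (x, w) \<in> r} (restricted_kernel K ?Cs w)" if w: "w \<in> A" for w
  proof -
    have nodes: "w \<in> nodes G" "{x \<in> A. (x, w) \<in> r} \<subseteq> nodes G" "?Cs w \<subseteq> nodes G"
      using w A_nodes pred_bd_subset[OF anc slo w] by auto
    have "restricted_kernel K ?Cs w = (\<lambda>y. K w (?Cs w) (restrict y (?Cs w)))"
      by (simp add: restricted_kernel_def fun_eq_iff)
    then show ?thesis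
      using cond_indep_iff_is_rcd_restrict[OF P sP nodes(1) pred_bd_subset[OF anc slo w] nodes(2)] rcd nodes
      by simp
  qed
  then have "(\<forall>w \<in> A. cond_indep P M {w} {x \<in> A. (x, w) \<in> r} (?Cs w))
      \<longleftrightarrow> (\<forall>w \<in> set ?ws. is_rcd P M w {x \<in> A. (x, w) \<in> r} (restricted_kernel K ?Cs w))"
    using sorted(1) by simp
  also have "\<dots> \<longleftrightarrow> (\<forall>i < length ?ws. is_rcd P M (?ws ! i) (set (take i ?ws)) (restricted_kernel K ?Cs (?ws ! i)))"
    unfolding all_set_conv_all_nth using sorted(3) by simp
  also have "\<dots> \<longleftrightarrow>
      distr P (PiM A M) (\<lambda>x. restrict x A) = chain_measure (restricted_kernel K ?Cs) M {} ?ws (\<lambda>_. undefined)"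
    using distr_restrict_eq_chain_measure_iff[OF P sP _ is_kernel_chain_ancestral[OF anc]] sorted(1) A_nodes
    by simp
  finally show ?thesis .
qed

lemma recursive_factorization_iff_distr_eq_chain_measure:
  "recursive_factorization G M P r K \<longleftrightarrow>
    (\<forall>A. ancestral G A \<longrightarrow> distr P (PiM A M) (\<lambda>x. restrict x A)
        = chain_measure (restricted_kernel K (pred_bd (induced G A) r)) M {} (sorted_nodes r A) (\<lambda>_. undefined))"
proof -
  have "(\<forall>B. (\<forall>v \<in> A. B v \<in> sets (M v)) \<longrightarrow> emeasure (distr P (PiM A M) (\<lambda>x. restrict x A)) (PiE A B)
        = iter_int K (pred_bd (induced G A) r) B (sorted_nodes r A) (\<lambda>_. undefined))
    \<longleftrightarrow> distr P (PiM A M) (\<lambda>x. restrict x A)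
        = chain_measure (restricted_kernel K (pred_bd (induced G A) r)) M {} (sorted_nodes r A) (\<lambda>_. undefined)"
    (is "?rect \<longleftrightarrow> ?D = ?C") if anc: "ancestral G A" for A
  proof -
    note chain = is_kernel_chain_ancestral[OF anc] and sorted = sorted_nodes_ancestral[OF anc]
    have A: "finite A" "A \<subseteq> nodes G" using anc hedg by (auto simp: ancestral_def is_hedg_def intro: finite_subset)
    have "?rect \<longleftrightarrow> (\<forall>B. (\<forall>v \<in> A. B v \<in> sets (M v)) \<longrightarrow> emeasure ?D (PiE A B) = emeasure ?C (PiE A B))"
      using emeasure_chain_measure_PiE[OF chain] sorted(1) by auto
    also have "\<dots> \<longleftrightarrow> ?D = ?C"
    proof
      assume "\<forall>B. (\<forall>v \<in> A. B v \<in> sets (M v)) \<longrightarrow> emeasure ?D (PiE A B) = emeasure ?C (PiE A B)"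
      then show "?D = ?C"
        using A sets_chain_measure[OF chain space_PiM_empty_undefined] sorted(1)
          prob_space.emeasure_space_1[OF prob_space.prob_space_distr[OF P measurable_restrict_of_sets_eq[OF sP A(2)]]]
        by (intro measure_eqI_PiM_rectangles) auto
    qed simp
    finally show ?thesis .
  qed
  then show ?thesis unfolding recursive_factorization_def by blast
qed

end

theorem mainTheorem15:
  fixes G :: "'v hedg"
    and M :: "'v \<Rightarrow> 'x measure"
    and P :: "('v \<Rightarrow> 'x) measure"
    and r :: "('v \<times> 'v) set"
    and K :: "'v \<Rightarrow> 'v set \<Rightarrow> ('v \<Rightarrow> 'x) \<Rightarrow> 'x measure"
  assumes "is_hedg G"
    and "\<forall>v \<in> nodes G. standard_borel (M v)"
    and "prob_space P" and "sets P = sets (PiM (nodes G) M)"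
    and "strict_linear_order_on (nodes G) r"
    and "\<forall>v \<in> nodes G. \<forall>C \<subseteq> nodes G. is_rcd P M v C (K v C)"
  shows "ordered_local_markov G M P r \<longleftrightarrow> recursive_factorization G M P r K"
proof -
  note setting = assms(1,3-6)
  have "ordered_local_markov G M P r \<longleftrightarrow>
      (\<forall>A. ancestral G A \<longrightarrow> (\<forall>w \<in> A. cond_indep P M {w} {x \<in> A. (x, w) \<in> r} (pred_bd (induced G A) r w)))"
    unfolding ordered_local_markov_def
    by (rule all_ancestral_Pred_le_iff_all_ancestral[OF assms(1,5), where Q="\<lambda>v Y Z. cond_indep P M {v} Y Z"])
  also have "\<dots> \<longleftrightarrow> (\<forall>A. ancestral G A \<longrightarrow> distr P (PiM A M) (\<lambda>x. restrict x A)
      = chain_measure (restricted_kernel K (pred_bd (induced G A) r)) M {} (sorted_nodes r A) (\<lambda>_. undefined))"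
    using ancestral_cond_indep_iff_distr_eq_chain_measure[OF setting] by blast
  also have "\<dots> \<longleftrightarrow> recursive_factorization G M P r K"
    using recursive_factorization_iff_distr_eq_chain_measure[OF setting] by simp
  finally show ?thesis .
qed

end
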